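(* Let $\alpha,\beta,\gamma\in\mathbb{R}$ with $\beta>0$, $\gamma>0$, $\alpha+\beta>0$, and let $J=J(\alpha,\beta,\gamma)$ be the self-adjoint operator in $\ell^2(\mathbb{N})$ determined by the Jacobi matrix with diagonal entries $\lambda_k=\gamma k$ and off-diagonal entries $w_k=\sqrt{\alpha+\beta k}$, $k\in\mathbb{N}$ (i.e. $(Jx)_1=\lambda_1x_1+w_1x_2$, $(Jx)_k=w_{k-1}x_{k-1}+\lambda_kx_k+w_kx_{k+1}$ for $k\ge2$). Then the spectrum of $J$ coincides with the set of zeros of the function \[ F_J(\alpha,\beta,\gamma;z)={}_1F_1\!\left(1-\frac{\alpha}{\beta}-\frac{\beta}{\gamma^2}-\frac{z}{\gamma};1-\frac{\beta}{\gamma^2}-\frac{z}{\gamma};\frac{\beta}{\gamma^2}\right)\Big/\Gamma\!\left(1-\frac{\beta}{\gamma^2}-\frac{z}{\gamma}\right). \] Moreover, if $z$ is an eigenvalue then the vector $v$ with components \[ v_k=(-1)^k\beta^{k/2}\gamma^{-k}\,\frac{\Gamma\!\left(\frac{\alpha}{\beta}+k\right)^{1/2}}{\Gamma\!\left(1-\frac{\beta}{\gamma^2}-\frac{z}{\gamma}+k\right)}\,{}_1F_1\!\left(1-\frac{\alpha}{\beta}-\frac{\beta}{\gamma^2}-\frac{z}{\gamma};1-\frac{\beta}{\gamma^2}-\frac{z}{\gamma}+k;\frac{\beta}{\gamma^2}\right),\quad k\in\mathbb{N}, \] is a corresponding eigenvector.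
   Context: ${}_1F_1(a;b;x)$ is Kummer's confluent hypergeometric function; the quotient ${}_1F_1(a;b;x)/\Gamma(b)$ is understood as its entire (regularized) extension in $b$. *)

theory Defs
  imports "HOL-Analysis.Analysis"
begin

text \<open>Indexing convention: the paper indexes by k = 1,2,...; here a sequence
  x :: nat => complex stores the paper's component x_k at position k - 1,
  i.e. position n corresponds to k = n + 1.\<close>

text \<open>Regularized Kummer function 1F1(a;b;x)/Gamma(b), written as its entire
  power series sum_n (a)_n x^n / (n! Gamma(b+n)).\<close>
definition hyp1f1_reg :: "complex \<Rightarrow> complex \<Rightarrow> complex \<Rightarrow> complex" where
  "hyp1f1_reg a b x = (\<Sum>n. pochhammer a n * rGamma (b + of_nat n) * x ^ n / fact n)"

definition l2 :: "(nat \<Rightarrow> complex) set" where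
  "l2 = {x. summable (\<lambda>n. (cmod (x n))\<^sup>2)}"

definition l2norm :: "(nat \<Rightarrow> complex) \<Rightarrow> real" where
  "l2norm x = sqrt (\<Sum>n. (cmod (x n))\<^sup>2)"

definition jac_w :: "real \<Rightarrow> real \<Rightarrow> nat \<Rightarrow> real" where
  "jac_w \<alpha> \<beta> n = sqrt (\<alpha> + \<beta> * real (Suc n))"

definition jac_lambda :: "real \<Rightarrow> nat \<Rightarrow> real" where
  "jac_lambda \<gamma> n = \<gamma> * real (Suc n)"

definition jac_op :: "real \<Rightarrow> real \<Rightarrow> real \<Rightarrow> (nat \<Rightarrow> complex) \<Rightarrow> nat \<Rightarrow> complex" where
  "jac_op \<alpha> \<beta> \<gamma> x n =
     (if n = 0 then 0 else complex_of_real (jac_w \<alpha> \<beta> (n - 1)) * x (n - 1))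
     + complex_of_real (jac_lambda \<gamma> n) * x n
     + complex_of_real (jac_w \<alpha> \<beta> n) * x (Suc n)"

text \<open>Domain of the (maximal) operator J: the self-adjoint operator determined
  by the Jacobi matrix.\<close>
definition jac_dom :: "real \<Rightarrow> real \<Rightarrow> real \<Rightarrow> (nat \<Rightarrow> complex) set" where
  "jac_dom \<alpha> \<beta> \<gamma> = {x \<in> l2. jac_op \<alpha> \<beta> \<gamma> x \<in> l2}"

definition jac_resolvent :: "real \<Rightarrow> real \<Rightarrow> real \<Rightarrow> complex set" where
  "jac_resolvent \<alpha> \<beta> \<gamma> = {z.
     (\<forall>y\<in>l2. \<exists>x\<in>jac_dom \<alpha> \<beta> \<gamma>. (\<lambda>n. jac_op \<alpha> \<beta> \<gamma> x n - z * x n) = y) \<and>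
     (\<exists>C. \<forall>x\<in>jac_dom \<alpha> \<beta> \<gamma>. l2norm x \<le> C * l2norm (\<lambda>n. jac_op \<alpha> \<beta> \<gamma> x n - z * x n))}"

definition jac_spectrum :: "real \<Rightarrow> real \<Rightarrow> real \<Rightarrow> complex set" where
  "jac_spectrum \<alpha> \<beta> \<gamma> = - jac_resolvent \<alpha> \<beta> \<gamma>"

definition jac_eigenvalue :: "real \<Rightarrow> real \<Rightarrow> real \<Rightarrow> complex \<Rightarrow> bool" where
  "jac_eigenvalue \<alpha> \<beta> \<gamma> z \<longleftrightarrow>
     (\<exists>x\<in>jac_dom \<alpha> \<beta> \<gamma>. x \<noteq> (\<lambda>_. 0) \<and> (\<forall>n. jac_op \<alpha> \<beta> \<gamma> x n = z * x n))"

definition FJ :: "real \<Rightarrow> real \<Rightarrow> real \<Rightarrow> complex \<Rightarrow> complex" where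
  "FJ \<alpha> \<beta> \<gamma> z = hyp1f1_reg
     (1 - of_real (\<alpha> / \<beta>) - of_real (\<beta> / \<gamma>\<^sup>2) - z / of_real \<gamma>)
     (1 - of_real (\<beta> / \<gamma>\<^sup>2) - z / of_real \<gamma>)
     (of_real (\<beta> / \<gamma>\<^sup>2))"

text \<open>The candidate eigenvector; position n holds the paper's v_k with k = n+1.
  Note 1F1(a;b+k;x)/Gamma(b+k) is the regularized function at b+k.\<close>
definition jac_eigvec :: "real \<Rightarrow> real \<Rightarrow> real \<Rightarrow> complex \<Rightarrow> nat \<Rightarrow> complex" where
  "jac_eigvec \<alpha> \<beta> \<gamma> z n = (let k = Suc n in
     complex_of_real ((-1) ^ k * \<beta> powr (real k / 2) / \<gamma> ^ k
                      * sqrt (Gamma (\<alpha> / \<beta> + real k)))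
     * hyp1f1_reg
         (1 - of_real (\<alpha> / \<beta>) - of_real (\<beta> / \<gamma>\<^sup>2) - z / of_real \<gamma>)
         (1 - of_real (\<beta> / \<gamma>\<^sup>2) - z / of_real \<gamma> + of_nat k)
         (of_real (\<beta> / \<gamma>\<^sup>2)))"

end

theory Submission
  imports Defs "HOL-Real_Asymp.Real_Asymp"
begin

text \<open>The candidate eigenvector is built from the regularized Kummer functions
  \<open>F\<^sub>k = \<^sub>1F\<^sub>1(a; b + k; x) / \<Gamma>(b + k)\<close>. Their contiguous relation in the second parameter says
  precisely that it satisfies every row of \<open>(J - z) v = 0\<close> except the first, where the defect is a
  nonzero multiple of \<open>F\<^sub>J(z) = F\<^sub>0\<close>; and since \<open>F\<^sub>k\<close> decays like \<open>1 / \<Gamma>(b + k)\<close>, it is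
  square-summable. So the zeros of \<open>F\<^sub>J\<close> are eigenvalues.

  Conversely, let \<open>F\<^sub>J(z) \<noteq> 0\<close>. Far out, the diagonal \<open>\<gamma> k\<close> dominates the off-diagonal
  \<open>\<surd>(\<alpha> + \<beta> k)\<close>, so the rows beyond some \<open>N\<close> can be solved by a Neumann series and obey a maximum
  principle. Back substitution solves the finitely many remaining rows except the first, which is
  then corrected by a multiple of the candidate eigenvector. The maximum principle also shows that
  \<open>J - z\<close> is injective on \<open>\<ell>\<^sup>2\<close>, which yields the bound on the inverse; hence \<open>z\<close> lies in the
  resolvent set.\<close>

section \<open>The regularized Kummer series\<close>

definition hyp1f1_reg_term :: "complex \<Rightarrow> complex \<Rightarrow> complex \<Rightarrow> nat \<Rightarrow> complex" where
  "hyp1f1_reg_term a b x n = pochhammer a n * rGamma (b + of_nat n) * x ^ n / fact n"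

lemma rGamma_add_nat_Suc: "rGamma (b + of_nat n) = (b + of_nat n) * rGamma (b + of_nat (Suc n))"
  using rGamma_plus1[of "b + of_nat n"] by (simp add: add.assoc add.commute[of 1])

lemma norm_rGamma_add_nat_le:
  assumes "Re b \<ge> 1"
  shows "norm (rGamma (b + of_nat n)) \<le> norm (rGamma b) / fact n"
proof (induction n)
  case (Suc n)
  have "real (Suc n) \<le> Re (b + of_nat n)" using assms by simp
  also have "\<dots> \<le> norm (b + of_nat n)" by (rule complex_Re_le_cmod)
  finally have "norm (rGamma (b + of_nat (Suc n))) * real (Suc n) \<le> norm (rGamma (b + of_nat n))"
    using rGamma_add_nat_Suc[of b n] by (simp add: norm_mult mult_right_mono mult.commute)
  also have "\<dots> \<le> norm (rGamma b) / fact n" by (rule Suc.IH)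
  finally have "norm (rGamma (b + of_nat (Suc n))) \<le> norm (rGamma b) / fact n / real (Suc n)"
    by (simp add: pos_le_divide_eq ac_simps del: of_nat_Suc)
  also have "\<dots> = norm (rGamma b) / fact (Suc n)" by simp
  finally show ?case .
qed simp

lemma norm_pochhammer_le: "norm (pochhammer (a::complex) n) \<le> fact n * (1 + norm a) ^ n"
proof (induction n)
  case (Suc n)
  have "norm (a + of_nat n) \<le> norm a + real n"
    using norm_triangle_ineq[of a "of_nat n"] by simp
  also have "\<dots> \<le> (1 + norm a) * real (Suc n)" by (simp add: algebra_simps)
  finally have "norm (pochhammer a n) * norm (a + of_nat n)
      \<le> (fact n * (1 + norm a) ^ n) * ((1 + norm a) * real (Suc n))"
    using Suc.IH by (intro mult_mono) auto
  also have "\<dots> = fact (Suc n) * (1 + norm a) ^ Suc n" by (simp add: algebra_simps)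
  finally show ?case by (simp only: pochhammer_Suc norm_mult)
qed simp

lemma norm_hyp1f1_reg_term_le:
  assumes "Re (b + of_nat m) \<ge> 1"
  shows "norm (hyp1f1_reg_term a b x (n + m))
           \<le> norm (rGamma (b + of_nat m)) * ((1 + norm a) * norm x) ^ (n + m) / fact n"
proof -
  have "norm (hyp1f1_reg_term a b x (n + m))
      = norm (pochhammer a (n + m)) * norm (rGamma ((b + of_nat m) + of_nat n)) * norm x ^ (n + m)
        / fact (n + m)"
    by (simp add: hyp1f1_reg_term_def norm_mult norm_divide norm_power add_ac)
  also have "\<dots> \<le> (fact (n + m) * (1 + norm a) ^ (n + m)) * (norm (rGamma (b + of_nat m)) / fact n)
                   * norm x ^ (n + m) / fact (n + m)"
    by (intro divide_right_mono mult_right_mono mult_mono norm_pochhammer_le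
          norm_rGamma_add_nat_le assms) auto
  also have "\<dots> = norm (rGamma (b + of_nat m)) * ((1 + norm a) * norm x) ^ (n + m) / fact n"
    by (simp add: power_mult_distrib)
  finally show ?thesis .
qed

lemma exp_series_scaled: "(\<lambda>n. c * y ^ n / fact n) sums (c * exp (y::real))"
  using sums_mult[OF exp_converges[of y], of c] by (simp add: divide_inverse ac_simps)

lemma summable_hyp1f1_reg_term: "summable (hyp1f1_reg_term a b x)"
proof -
  obtain m :: nat where "real m \<ge> 1 - Re b"
    using real_arch_simple by blast
  then have "Re (b + of_nat m) \<ge> 1" by simp
  define y where "y = (1 + norm a) * norm x"
  have "summable (\<lambda>n. norm (rGamma (b + of_nat m)) * y ^ m * y ^ n / fact n)"
    using sums_summable[OF exp_series_scaled] .
  then have "summable (\<lambda>n. hyp1f1_reg_term a b x (n + m))"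
    by (rule summable_comparison_test[rotated])
       (use norm_hyp1f1_reg_term_le[OF \<open>Re (b + of_nat m) \<ge> 1\<close>] in
        \<open>auto simp: y_def power_add ac_simps\<close>)
  then show ?thesis by (simp add: summable_iff_shift)
qed

lemma hyp1f1_reg_sums: "hyp1f1_reg_term a b x sums hyp1f1_reg a b x"
  unfolding hyp1f1_reg_def hyp1f1_reg_term_def[symmetric]
  by (rule summable_sums[OF summable_hyp1f1_reg_term])

text \<open>Only the leading term \<open>rGamma b\<close> of the series survives for large \<open>b\<close>.\<close>

lemma norm_hyp1f1_reg_minus_rGamma_le:
  fixes a b x :: complex
  defines "y \<equiv> (1 + norm a) * norm x"
  assumes "Re b \<ge> 1"
  shows "norm (hyp1f1_reg a b x - rGamma b) \<le> norm (rGamma b) * (y * exp y) / norm b"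
proof -
  have b0: "b \<noteq> 0" using assms(2) by auto
  have "hyp1f1_reg_term a b x 0 = rGamma b" by (simp add: hyp1f1_reg_term_def)
  then have tail: "(\<lambda>n. hyp1f1_reg_term a b x (Suc n)) sums (hyp1f1_reg a b x - rGamma b)"
    using sums_Suc_iff[of "hyp1f1_reg_term a b x"] hyp1f1_reg_sums[of a b x] by simp
  have "norm (hyp1f1_reg_term a b x (n + 1)) \<le> norm (rGamma (b + 1)) * y * y ^ n / fact n" for n
    using norm_hyp1f1_reg_term_le[of b 1] assms(2) by (simp add: y_def ac_simps)
  then have "norm (hyp1f1_reg a b x - rGamma b) \<le> (\<Sum>n. norm (rGamma (b + 1)) * y * y ^ n / fact n)"
    unfolding sums_unique[OF tail]
    by (intro norm_suminf_le sums_summable[OF exp_series_scaled]) simp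
  also have "\<dots> = norm (rGamma (b + 1)) * y * exp y"
    using exp_series_scaled sums_unique by metis
  also have "norm (rGamma (b + 1)) = norm (rGamma b) / norm b"
    using arg_cong[OF rGamma_plus1[of b], of norm] b0 by (simp add: norm_mult field_simps)
  finally show ?thesis by simp
qed

lemma norm_hyp1f1_reg_le:
  assumes "Re b \<ge> 1"
  shows "norm (hyp1f1_reg a b x) \<le> norm (rGamma b) * (1 + (1 + norm a) * norm x * exp ((1 + norm a) * norm x))"
proof -
  define E where "E = (1 + norm a) * norm x * exp ((1 + norm a) * norm x)"
  have "1 \<le> norm b" using assms complex_Re_le_cmod[of b] by linarith
  then have "norm (rGamma b) * E / norm b \<le> norm (rGamma b) * E / 1"
    by (intro divide_left_mono) (auto simp: E_def)
  then show ?thesis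
    using norm_hyp1f1_reg_minus_rGamma_le[OF assms, of a x] norm_triangle_ineq2[of "hyp1f1_reg a b x" "rGamma b"]
    by (simp add: E_def algebra_simps)
qed

lemma hyp1f1_reg_nonzero:
  assumes "Re b \<ge> 1" and "norm b > (1 + norm a) * norm x * exp ((1 + norm a) * norm x)"
  shows "hyp1f1_reg a b x \<noteq> 0"
proof
  assume "hyp1f1_reg a b x = 0"
  define E where "E = (1 + norm a) * norm x * exp ((1 + norm a) * norm x)"
  have "rGamma b \<noteq> 0"
    using assms(1) by (auto simp: rGamma_eq_zero_iff elim!: nonpos_Ints_cases')
  have "E \<ge> 0" by (simp add: E_def)
  have "norm (rGamma b) * E < norm (rGamma b) * norm b"
    using \<open>rGamma b \<noteq> 0\<close> assms(2) by (simp add: E_def)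
  moreover have "norm b > 0" using \<open>E \<ge> 0\<close> assms(2) unfolding E_def by linarith
  ultimately have "norm (rGamma b) * E / norm b < norm (rGamma b)"
    by (simp add: divide_less_eq)
  then show False
    using norm_hyp1f1_reg_minus_rGamma_le[OF assms(1), of a x] \<open>hyp1f1_reg a b x = 0\<close>
    by (simp add: E_def)
qed

lemma hyp1f1_reg_term_contiguous:
  "hyp1f1_reg_term a b x (Suc n) - b * hyp1f1_reg_term a (b + 1) x (Suc n)
     + x * ((b + 1 - a) * hyp1f1_reg_term a (b + 2) x n - hyp1f1_reg_term a (b + 1) x n) = 0"
proof -
  define r where "r = rGamma (b + of_nat (Suc (Suc n)))"
  have "rGamma (b + of_nat (Suc n)) = (b + of_nat (Suc n)) * r"
    unfolding r_def by (rule rGamma_add_nat_Suc)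
  moreover have "b + 1 + of_nat (Suc n) = b + of_nat (Suc (Suc n))"
    and "b + 2 + of_nat n = b + of_nat (Suc (Suc n))" and "b + 1 + of_nat n = b + of_nat (Suc n)"
    by simp_all
  ultimately have "rGamma (b + 1 + of_nat (Suc n)) = r" "rGamma (b + 2 + of_nat n) = r"
    "rGamma (b + of_nat (Suc n)) = (b + of_nat (Suc n)) * r"
    "rGamma (b + 1 + of_nat n) = (b + of_nat (Suc n)) * r"
    unfolding r_def by (simp_all only:)
  then show ?thesis
    unfolding hyp1f1_reg_term_def
    by (simp add: pochhammer_Suc field_simps del: of_nat_Suc) (simp add: algebra_simps)
qed

lemma hyp1f1_reg_contiguous:
  "hyp1f1_reg a b x + (- b - x) * hyp1f1_reg a (b + 1) x
     + x * (b + 1 - a) * hyp1f1_reg a (b + 2) x = 0"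
proof -
  define A where "A = (\<lambda>n. hyp1f1_reg_term a b x n - b * hyp1f1_reg_term a (b + 1) x n)"
  define C where
    "C = (\<lambda>n. x * ((b + 1 - a) * hyp1f1_reg_term a (b + 2) x n - hyp1f1_reg_term a (b + 1) x n))"
  have "A sums (hyp1f1_reg a b x - b * hyp1f1_reg a (b + 1) x)"
    unfolding A_def by (intro sums_diff sums_mult hyp1f1_reg_sums)
  moreover have "A 0 = 0"
    using rGamma_add_nat_Suc[of b 0] by (simp add: A_def hyp1f1_reg_term_def add.commute)
  ultimately have "(\<lambda>n. A (Suc n)) sums (hyp1f1_reg a b x - b * hyp1f1_reg a (b + 1) x)"
    by (simp add: sums_Suc_iff)
  moreover have "C sums (x * ((b + 1 - a) * hyp1f1_reg a (b + 2) x - hyp1f1_reg a (b + 1) x))"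
    unfolding C_def by (intro sums_diff sums_mult hyp1f1_reg_sums)
  ultimately have "(\<lambda>n. A (Suc n) + C n) sums (hyp1f1_reg a b x - b * hyp1f1_reg a (b + 1) x
      + x * ((b + 1 - a) * hyp1f1_reg a (b + 2) x - hyp1f1_reg a (b + 1) x))"
    by (rule sums_add)
  moreover have "(\<lambda>n. A (Suc n) + C n) = (\<lambda>_. 0)"
    using hyp1f1_reg_term_contiguous by (simp add: A_def C_def)
  ultimately show ?thesis
    using sums_unique2[OF _ sums_zero] by (fastforce simp: algebra_simps)
qed

lemma eventually_Re_add_nat_ge: "eventually (\<lambda>n. c \<le> Re (b + of_nat n)) sequentially"
  by simp real_asymp

lemma eventually_norm_add_nat_gt: "eventually (\<lambda>n. c < norm (b + of_nat n :: complex)) sequentially"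
  using eventually_Re_add_nat_ge[of "c + 1" b]
proof eventually_elim
  case (elim n)
  then show ?case using complex_Re_le_cmod[of "b + of_nat n"] by linarith
qed

section \<open>Square-summable sequences\<close>

lemma l2norm_nonneg: "x \<in> l2 \<Longrightarrow> l2norm x \<ge> 0"
  by (simp add: l2norm_def l2_def suminf_nonneg)

lemma partial_sum_le_l2norm_sq:
  assumes "x \<in> l2"
  shows "(\<Sum>n<M. (cmod (x n))\<^sup>2) \<le> (l2norm x)\<^sup>2"
proof -
  have s: "summable (\<lambda>n. (cmod (x n))\<^sup>2)" using assms by (simp add: l2_def)
  have "(\<Sum>n<M. (cmod (x n))\<^sup>2) \<le> (\<Sum>n. (cmod (x n))\<^sup>2)"
    by (rule sum_le_suminf[OF s]) auto
  also have "\<dots> = (l2norm x)\<^sup>2"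
    unfolding l2norm_def by (simp add: suminf_nonneg[OF s])
  finally show ?thesis .
qed

lemma l2_if_partial_sums_le:
  assumes "\<And>M. (\<Sum>n<M. (cmod (y n))\<^sup>2) \<le> B\<^sup>2" and "B \<ge> 0"
  shows "y \<in> l2 \<and> l2norm y \<le> B"
proof -
  have s: "summable (\<lambda>n. (cmod (y n))\<^sup>2)"
    by (rule summableI_nonneg_bounded[where x="B\<^sup>2"]) (use assms in auto)
  have "(\<Sum>n. (cmod (y n))\<^sup>2) \<le> B\<^sup>2"
    by (rule suminf_le_const[OF s]) (use assms in auto)
  then have "l2norm y \<le> sqrt (B\<^sup>2)" unfolding l2norm_def by (rule real_sqrt_le_mono)
  with assms(2) s show ?thesis by (simp add: l2_def)
qed

lemma l2_dominated:
  assumes "x \<in> l2" and "\<And>n. cmod (y n) \<le> c * cmod (x n)" and "c \<ge> 0"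
  shows "y \<in> l2 \<and> l2norm y \<le> c * l2norm x"
proof (rule l2_if_partial_sums_le)
  fix M
  have "(cmod (y n))\<^sup>2 \<le> c\<^sup>2 * (cmod (x n))\<^sup>2" for n
    using power_mono[OF assms(2)[of n], of 2] by (simp add: power_mult_distrib)
  then have "(\<Sum>n<M. (cmod (y n))\<^sup>2) \<le> c\<^sup>2 * (\<Sum>n<M. (cmod (x n))\<^sup>2)"
    by (simp add: sum_distrib_left sum_mono)
  also have "\<dots> \<le> c\<^sup>2 * (l2norm x)\<^sup>2"
    by (intro mult_left_mono partial_sum_le_l2norm_sq assms) auto
  finally show "(\<Sum>n<M. (cmod (y n))\<^sup>2) \<le> (c * l2norm x)\<^sup>2" by (simp add: power_mult_distrib)
qed (use assms l2norm_nonneg[OF assms(1)] in auto)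

lemma l2_mult_bounded:
  assumes "x \<in> l2" and "\<And>n. cmod (c n) \<le> k"
  shows "(\<lambda>n. c n * x n) \<in> l2 \<and> l2norm (\<lambda>n. c n * x n) \<le> k * l2norm x"
proof (rule l2_dominated[OF assms(1)])
  show "k \<ge> 0" using assms(2)[of 0] norm_ge_zero[of "c 0"] by linarith
  then show "cmod (c n * x n) \<le> k * cmod (x n)" for n
    using assms(2)[of n] by (simp add: norm_mult mult_right_mono)
qed

lemma L2_set_lessThan_le_l2norm: "x \<in> l2 \<Longrightarrow> L2_set (\<lambda>n. cmod (x n)) {..<M} \<le> l2norm x"
  unfolding L2_set_def using partial_sum_le_l2norm_sq[of x M] l2norm_nonneg[of x]
  by (metis real_sqrt_le_mono real_sqrt_abs abs_of_nonneg)

lemma l2_add: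
  assumes "x \<in> l2" and "y \<in> l2"
  shows "(\<lambda>n. x n + y n) \<in> l2 \<and> l2norm (\<lambda>n. x n + y n) \<le> l2norm x + l2norm y"
proof (rule l2_if_partial_sums_le)
  fix M
  have "L2_set (\<lambda>n. cmod (x n + y n)) {..<M} \<le> L2_set (\<lambda>n. cmod (x n) + cmod (y n)) {..<M}"
    by (rule L2_set_mono) (auto simp: norm_triangle_ineq)
  also have "\<dots> \<le> L2_set (\<lambda>n. cmod (x n)) {..<M} + L2_set (\<lambda>n. cmod (y n)) {..<M}"
    by (rule L2_set_triangle_ineq)
  also have "\<dots> \<le> l2norm x + l2norm y"
    by (intro add_mono L2_set_lessThan_le_l2norm assms)
  finally show "(\<Sum>n<M. (cmod (x n + y n))\<^sup>2) \<le> (l2norm x + l2norm y)\<^sup>2"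
    by (intro sqrt_le_D) (simp add: L2_set_def)
qed (use l2norm_nonneg assms in \<open>auto intro: add_nonneg_nonneg\<close>)

lemma l2_scale:
  assumes "x \<in> l2"
  shows "(\<lambda>n. c * x n) \<in> l2 \<and> l2norm (\<lambda>n. c * x n) \<le> cmod c * l2norm x"
  by (rule l2_dominated[OF assms]) (auto simp: norm_mult)

lemma l2_diff:
  assumes "x \<in> l2" and "y \<in> l2"
  shows "(\<lambda>n. x n - y n) \<in> l2 \<and> l2norm (\<lambda>n. x n - y n) \<le> l2norm x + l2norm y"
  using l2_add[OF assms(1) conjunct1[OF l2_scale[OF assms(2), of "-1"]]] l2_scale[OF assms(2), of "-1"]
  by auto

lemma norm_le_l2norm:
  assumes "x \<in> l2"
  shows "cmod (x n) \<le> l2norm x"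
proof -
  have "(cmod (x n))\<^sup>2 \<le> (\<Sum>k<Suc n. (cmod (x k))\<^sup>2)"
    by (rule member_le_sum) auto
  also have "\<dots> \<le> (l2norm x)\<^sup>2" by (rule partial_sum_le_l2norm_sq[OF assms])
  finally show ?thesis using l2norm_nonneg[OF assms] by (simp add: abs_le_square_iff)
qed

lemma l2norm_pos: "x \<in> l2 \<Longrightarrow> x \<noteq> (\<lambda>_. 0) \<Longrightarrow> l2norm x > 0"
  using norm_le_l2norm[of x] l2norm_nonneg[of x] by (force simp: order.order_iff_strict)

lemma l2_shift_left:
  assumes "x \<in> l2"
  shows "(\<lambda>n. x (Suc n)) \<in> l2 \<and> l2norm (\<lambda>n. x (Suc n)) \<le> l2norm x"
proof (rule l2_if_partial_sums_le)
  fix M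
  have "(\<Sum>n<M. (cmod (x (Suc n)))\<^sup>2) \<le> (\<Sum>n<Suc M. (cmod (x n))\<^sup>2)"
    by (simp only: sum.lessThan_Suc_shift) simp
  also have "\<dots> \<le> (l2norm x)\<^sup>2" by (rule partial_sum_le_l2norm_sq[OF assms])
  finally show "(\<Sum>n<M. (cmod (x (Suc n)))\<^sup>2) \<le> (l2norm x)\<^sup>2" .
qed (rule l2norm_nonneg[OF assms])

lemma l2_shift_right:
  assumes "x \<in> l2"
  shows "(\<lambda>n. if n = 0 then 0 else x (n - 1)) \<in> l2
         \<and> l2norm (\<lambda>n. if n = 0 then 0 else x (n - 1)) \<le> l2norm x"
proof (rule l2_if_partial_sums_le)
  fix M
  have "(\<Sum>n<M. (cmod (if n = 0 then 0 else x (n - 1)))\<^sup>2)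
      \<le> (\<Sum>n<Suc M. (cmod (if n = 0 then 0 else x (n - 1)))\<^sup>2)"
    by simp
  also have "\<dots> = (\<Sum>n<M. (cmod (x n))\<^sup>2)"
    by (simp add: sum.lessThan_Suc_shift del: sum.lessThan_Suc)
  also have "\<dots> \<le> (l2norm x)\<^sup>2" by (rule partial_sum_le_l2norm_sq[OF assms])
  finally show "(\<Sum>n<M. (cmod (if n = 0 then 0 else x (n - 1)))\<^sup>2) \<le> (l2norm x)\<^sup>2" .
qed (rule l2norm_nonneg[OF assms])

lemma l2_pointwise_limit:
  assumes "\<And>k. X k \<in> l2" and "\<And>k. l2norm (X k) \<le> B" and "\<And>n. (\<lambda>k. X k n) \<longlonglongrightarrow> x n"
  shows "x \<in> l2 \<and> l2norm x \<le> B"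
proof (rule l2_if_partial_sums_le)
  fix M
  have "(\<Sum>n<M. (cmod (X k n))\<^sup>2) \<le> B\<^sup>2" for k
    using order_trans[OF partial_sum_le_l2norm_sq[OF assms(1)]
                         power_mono[OF assms(2) l2norm_nonneg[OF assms(1)]]] .
  moreover have "(\<lambda>k. \<Sum>n<M. (cmod (X k n))\<^sup>2) \<longlonglongrightarrow> (\<Sum>n<M. (cmod (x n))\<^sup>2)"
    by (intro tendsto_sum tendsto_power tendsto_norm assms)
  ultimately show "(\<Sum>n<M. (cmod (x n))\<^sup>2) \<le> B\<^sup>2"
    by (intro LIMSEQ_le_const2) auto
next
  show "B \<ge> 0" using assms(2)[of 0] l2norm_nonneg[OF assms(1)[of 0]] by linarith
qed

lemma l2_finite_support:
  assumes "\<And>n. n \<ge> M \<Longrightarrow> x n = 0"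
  shows "x \<in> l2 \<and> l2norm x \<le> (\<Sum>n<M. cmod (x n))"
proof (rule l2_if_partial_sums_le)
  fix K
  have "(\<Sum>n<K. (cmod (x n))\<^sup>2) \<le> (\<Sum>n<M. (cmod (x n))\<^sup>2)"
  proof -
    have "(\<Sum>n<K. (cmod (x n))\<^sup>2) = (\<Sum>n<min K M. (cmod (x n))\<^sup>2)"
      using assms by (intro sum.mono_neutral_right) auto
    also have "\<dots> \<le> (\<Sum>n<M. (cmod (x n))\<^sup>2)" by (intro sum_mono2) auto
    finally show ?thesis .
  qed
  also have "\<dots> = (L2_set (\<lambda>n. cmod (x n)) {..<M})\<^sup>2"
    by (simp add: L2_set_def sum_nonneg)
  also have "\<dots> \<le> (\<Sum>n<M. cmod (x n))\<^sup>2"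
    by (intro power_mono L2_set_le_sum L2_set_nonneg) simp
  finally show "(\<Sum>n<K. (cmod (x n))\<^sup>2) \<le> (\<Sum>n<M. cmod (x n))\<^sup>2" .
qed (simp add: sum_nonneg)

lemma l2_LIMSEQ_zero: "x \<in> l2 \<Longrightarrow> (\<lambda>n. cmod (x n)) \<longlonglongrightarrow> 0"
  using summable_LIMSEQ_zero[of "\<lambda>n. (cmod (x n))\<^sup>2"] by (simp add: l2_def)

lemma LIMSEQ_zero_attains_max:
  fixes f :: "nat \<Rightarrow> real"
  assumes "f \<longlonglongrightarrow> 0" and "\<And>n. f n \<ge> 0"
  shows "\<exists>m\<ge>N. \<forall>n\<ge>N. f n \<le> f m"
proof (cases "\<forall>n\<ge>N. f n = 0")
  case True
  then show ?thesis using assms(2) by (intro exI[of _ N]) auto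
next
  case False
  then obtain k where k: "k \<ge> N" "f k > 0" using assms(2) by (force simp: order.order_iff_strict)
  then obtain M where M: "\<And>n. n \<ge> M \<Longrightarrow> f n < f k"
    using order_tendstoD(2)[OF assms(1) k(2)] by (auto simp: eventually_sequentially)
  define S where "S = {N..max M k}"
  have S: "finite (f ` S)" "k \<in> S" using k(1) by (auto simp: S_def)
  have "Max (f ` S) \<in> f ` S" using S by (intro Max_in) auto
  then obtain m where m: "m \<in> S" "f m = Max (f ` S)" by (metis imageE)
  then have m_max: "\<And>n. n \<in> S \<Longrightarrow> f n \<le> f m" using S(1) by simp
  show ?thesis
  proof (intro exI[of _ m] conjI allI impI)
    show "m \<ge> N" using m(1) by (simp add: S_def)
    fix n assume "n \<ge> N"
    show "f n \<le> f m"
    proof (cases "n \<le> max M k")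
      case True then show ?thesis using m_max \<open>n \<ge> N\<close> by (simp add: S_def)
    next
      case False
      then have "f n < f k" using M by simp
      also have "f k \<le> f m" using m_max k(1) by (simp add: S_def)
      finally show ?thesis by simp
    qed
  qed
qed

section \<open>The operator J - z and its eigenvector candidate\<close>

definition jac_op_minus :: "real \<Rightarrow> real \<Rightarrow> real \<Rightarrow> complex \<Rightarrow> (nat \<Rightarrow> complex) \<Rightarrow> nat \<Rightarrow> complex" where
  "jac_op_minus \<alpha> \<beta> \<gamma> z x n = jac_op \<alpha> \<beta> \<gamma> x n - z * x n"

definition jac_diag :: "real \<Rightarrow> complex \<Rightarrow> nat \<Rightarrow> complex" where
  "jac_diag \<gamma> z n = of_real (jac_lambda \<gamma> n) - z"

definition kummer_a :: "real \<Rightarrow> real \<Rightarrow> real \<Rightarrow> complex \<Rightarrow> complex" where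
  "kummer_a \<alpha> \<beta> \<gamma> z = 1 - of_real (\<alpha> / \<beta>) - of_real (\<beta> / \<gamma>\<^sup>2) - z / of_real \<gamma>"

definition kummer_b :: "real \<Rightarrow> real \<Rightarrow> complex \<Rightarrow> complex" where
  "kummer_b \<beta> \<gamma> z = 1 - of_real (\<beta> / \<gamma>\<^sup>2) - z / of_real \<gamma>"

definition kummer_x :: "real \<Rightarrow> real \<Rightarrow> complex" where
  "kummer_x \<beta> \<gamma> = of_real (\<beta> / \<gamma>\<^sup>2)"

definition kummer_seq :: "real \<Rightarrow> real \<Rightarrow> real \<Rightarrow> complex \<Rightarrow> nat \<Rightarrow> complex" where
  "kummer_seq \<alpha> \<beta> \<gamma> z k = hyp1f1_reg (kummer_a \<alpha> \<beta> \<gamma> z) (kummer_b \<beta> \<gamma> z + of_nat k) (kummer_x \<beta> \<gamma>)"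

definition eigvec_coeff :: "real \<Rightarrow> real \<Rightarrow> real \<Rightarrow> nat \<Rightarrow> real" where
  "eigvec_coeff \<alpha> \<beta> \<gamma> k = (-1) ^ k * \<beta> powr (real k / 2) / \<gamma> ^ k * sqrt (Gamma (\<alpha> / \<beta> + real k))"

lemma jac_eigvec_eq:
  "jac_eigvec \<alpha> \<beta> \<gamma> z n = of_real (eigvec_coeff \<alpha> \<beta> \<gamma> (Suc n)) * kummer_seq \<alpha> \<beta> \<gamma> z (Suc n)"
  by (simp add: jac_eigvec_def eigvec_coeff_def kummer_seq_def kummer_a_def kummer_b_def kummer_x_def)

lemma FJ_eq_kummer_seq_0: "FJ \<alpha> \<beta> \<gamma> z = kummer_seq \<alpha> \<beta> \<gamma> z 0"
  by (simp add: FJ_def kummer_seq_def kummer_a_def kummer_b_def kummer_x_def)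

lemma jac_op_minus_eq:
  "jac_op_minus \<alpha> \<beta> \<gamma> z x n =
     (if n = 0 then 0 else of_real (jac_w \<alpha> \<beta> (n - 1)) * x (n - 1))
     + jac_diag \<gamma> z n * x n + of_real (jac_w \<alpha> \<beta> n) * x (Suc n)"
  by (simp add: jac_op_minus_def jac_op_def jac_diag_def algebra_simps)

lemma jac_op_minus_linear:
  "jac_op_minus \<alpha> \<beta> \<gamma> z (\<lambda>n. x n - c * y n) n
     = jac_op_minus \<alpha> \<beta> \<gamma> z x n - c * jac_op_minus \<alpha> \<beta> \<gamma> z y n"
  by (simp add: jac_op_minus_eq algebra_simps)

locale jacobi_params =
  fixes \<alpha> \<beta> \<gamma> :: real
  assumes beta_pos: "\<beta> > 0" and gamma_pos: "\<gamma> > 0" and alpha_beta_pos: "\<alpha> + \<beta> > 0"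
begin

lemma alpha_div_beta_add_pos: "k \<ge> 1 \<Longrightarrow> \<alpha> / \<beta> + real k > 0"
proof -
  assume "k \<ge> 1"
  moreover have "\<alpha> / \<beta> > -1" using beta_pos alpha_beta_pos by (simp add: field_simps)
  ultimately show ?thesis by linarith
qed

lemma jac_w_sq: "(jac_w \<alpha> \<beta> n)\<^sup>2 = \<alpha> + \<beta> * real (Suc n)"
  using alpha_div_beta_add_pos[of "Suc n"] beta_pos by (simp add: jac_w_def field_simps)

lemma jac_w_pos: "jac_w \<alpha> \<beta> n > 0"
  using alpha_div_beta_add_pos[of "Suc n"] beta_pos by (simp add: jac_w_def field_simps)

lemma jac_w_mono: "m \<le> n \<Longrightarrow> jac_w \<alpha> \<beta> m \<le> jac_w \<alpha> \<beta> n"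
  unfolding jac_w_def using beta_pos by (intro real_sqrt_le_mono) (simp add: mult_left_mono)

lemma eigvec_coeff_Suc:
  "eigvec_coeff \<alpha> \<beta> \<gamma> (Suc (Suc n)) = - (jac_w \<alpha> \<beta> n / \<gamma>) * eigvec_coeff \<alpha> \<beta> \<gamma> (Suc n)"
proof -
  define c where "c = \<alpha> / \<beta> + real (Suc n)"
  have "c > 0" using alpha_div_beta_add_pos[of "Suc n"] by (simp add: c_def)
  then have "Gamma (c + 1) = c * Gamma c"
    by (intro Gamma_plus1) (auto elim!: nonpos_Ints_cases)
  then have "sqrt (Gamma (\<alpha> / \<beta> + real (Suc (Suc n)))) = sqrt c * sqrt (Gamma c)"
    by (simp add: c_def real_sqrt_mult add_ac)
  moreover have "\<beta> powr (real (Suc (Suc n)) / 2) = \<beta> powr (real (Suc n) / 2) * sqrt \<beta>"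
    using beta_pos by (simp add: powr_half_sqrt[symmetric] powr_add[symmetric] add_divide_distrib)
  moreover have "jac_w \<alpha> \<beta> n = sqrt \<beta> * sqrt c"
    using beta_pos by (simp add: jac_w_def c_def real_sqrt_mult[symmetric] field_simps)
  ultimately show ?thesis
    using gamma_pos by (simp add: eigvec_coeff_def c_def)
qed

lemma eigvec_coeff_nonzero: "k \<ge> 1 \<Longrightarrow> eigvec_coeff \<alpha> \<beta> \<gamma> k \<noteq> 0"
  using Gamma_real_pos[OF alpha_div_beta_add_pos[of k]] beta_pos gamma_pos
  by (simp add: eigvec_coeff_def)

lemma kummer_seq_recurrence:
  "kummer_seq \<alpha> \<beta> \<gamma> z n + (z / of_real \<gamma> - of_nat (Suc n)) * kummer_seq \<alpha> \<beta> \<gamma> z (Suc n)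
     + of_real ((jac_w \<alpha> \<beta> n)\<^sup>2 / \<gamma>\<^sup>2) * kummer_seq \<alpha> \<beta> \<gamma> z (Suc (Suc n)) = 0"
proof -
  define a where "a = kummer_a \<alpha> \<beta> \<gamma> z"
  define b where "b = kummer_b \<beta> \<gamma> z + of_nat n"
  define x where "x = kummer_x \<beta> \<gamma>"
  have "- b - x = z / of_real \<gamma> - of_nat (Suc n)"
    by (simp add: b_def x_def kummer_b_def kummer_x_def)
  moreover have "x * (b + 1 - a) = of_real ((jac_w \<alpha> \<beta> n)\<^sup>2 / \<gamma>\<^sup>2)"
  proof -
    have "b + 1 - a = of_real (\<alpha> / \<beta> + real (Suc n))"
      by (simp add: a_def b_def kummer_b_def kummer_a_def)
    then show ?thesis
      using beta_pos gamma_pos unfolding x_def kummer_x_def jac_w_sq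
      by (simp only: of_real_mult[symmetric]) (simp add: field_simps)
  qed
  moreover have "b + 1 = kummer_b \<beta> \<gamma> z + of_nat (Suc n)"
    and "b + 2 = kummer_b \<beta> \<gamma> z + of_nat (Suc (Suc n))"
    by (simp_all add: b_def)
  ultimately show ?thesis
    using hyp1f1_reg_contiguous[of a b x] by (simp only: kummer_seq_def a_def x_def b_def)
qed

lemma jac_w_mult_eigvec:
  "of_real (jac_w \<alpha> \<beta> n) * jac_eigvec \<alpha> \<beta> \<gamma> z n
     = - of_real (\<gamma> * eigvec_coeff \<alpha> \<beta> \<gamma> (Suc (Suc n))) * kummer_seq \<alpha> \<beta> \<gamma> z (Suc n)"
proof -
  have "jac_w \<alpha> \<beta> n * eigvec_coeff \<alpha> \<beta> \<gamma> (Suc n) = - (\<gamma> * eigvec_coeff \<alpha> \<beta> \<gamma> (Suc (Suc n)))"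
    using gamma_pos by (simp add: eigvec_coeff_Suc)
  then have "of_real (jac_w \<alpha> \<beta> n * eigvec_coeff \<alpha> \<beta> \<gamma> (Suc n)) * kummer_seq \<alpha> \<beta> \<gamma> z (Suc n)
      = of_real (- (\<gamma> * eigvec_coeff \<alpha> \<beta> \<gamma> (Suc (Suc n)))) * kummer_seq \<alpha> \<beta> \<gamma> z (Suc n)"
    by (simp only:)
  then show ?thesis
    unfolding jac_eigvec_eq by (simp add: mult.assoc)
qed

lemma jac_op_minus_eigvec_diag_part:
  "jac_diag \<gamma> z n * jac_eigvec \<alpha> \<beta> \<gamma> z n
     + of_real (jac_w \<alpha> \<beta> n) * jac_eigvec \<alpha> \<beta> \<gamma> z (Suc n)
   = of_real (\<gamma> * eigvec_coeff \<alpha> \<beta> \<gamma> (Suc n)) * kummer_seq \<alpha> \<beta> \<gamma> z n"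
proof -
  define g where "g = complex_of_real \<gamma>"
  define C where "C = complex_of_real (eigvec_coeff \<alpha> \<beta> \<gamma> (Suc n))"
  define W where "W = complex_of_real ((jac_w \<alpha> \<beta> n)\<^sup>2)"
  define R where "R = kummer_seq \<alpha> \<beta> \<gamma> z"
  have g: "g \<noteq> 0" using gamma_pos by (simp add: g_def)
  have "jac_w \<alpha> \<beta> n * eigvec_coeff \<alpha> \<beta> \<gamma> (Suc (Suc n))
      = - ((jac_w \<alpha> \<beta> n)\<^sup>2 / \<gamma> * eigvec_coeff \<alpha> \<beta> \<gamma> (Suc n))"
    by (simp add: eigvec_coeff_Suc power2_eq_square)
  then have "of_real (jac_w \<alpha> \<beta> n * eigvec_coeff \<alpha> \<beta> \<gamma> (Suc (Suc n))) * R (Suc (Suc n))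
      = of_real (- ((jac_w \<alpha> \<beta> n)\<^sup>2 / \<gamma> * eigvec_coeff \<alpha> \<beta> \<gamma> (Suc n))) * R (Suc (Suc n))"
    by (simp only:)
  then have "of_real (jac_w \<alpha> \<beta> n) * jac_eigvec \<alpha> \<beta> \<gamma> z (Suc n) = - (W / g * C * R (Suc (Suc n)))"
    unfolding jac_eigvec_eq W_def g_def C_def R_def by (simp add: mult.assoc)
  moreover have "of_real (jac_lambda \<gamma> n) = g * of_nat (Suc n)"
    by (simp add: jac_lambda_def g_def)
  ultimately have "jac_diag \<gamma> z n * jac_eigvec \<alpha> \<beta> \<gamma> z n
      + of_real (jac_w \<alpha> \<beta> n) * jac_eigvec \<alpha> \<beta> \<gamma> z (Suc n)
      = - (g * C) * ((z / g - of_nat (Suc n)) * R (Suc n) + W / g\<^sup>2 * R (Suc (Suc n)))"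
    using g unfolding jac_diag_def jac_eigvec_eq C_def[symmetric] R_def[symmetric]
    by (simp add: field_simps power2_eq_square)
  also have "(z / g - of_nat (Suc n)) * R (Suc n) + W / g\<^sup>2 * R (Suc (Suc n)) = - R n"
    using kummer_seq_recurrence[of z n] unfolding add_eq_0_iff[symmetric]
    by (simp add: R_def W_def g_def add.assoc)
  also have "- (g * C) * - R n = g * C * R n" by simp
  finally show ?thesis by (simp add: g_def C_def R_def)
qed

lemma jac_op_minus_eigvec:
  "jac_op_minus \<alpha> \<beta> \<gamma> z (jac_eigvec \<alpha> \<beta> \<gamma> z) n
     = (if n = 0 then of_real (\<gamma> * eigvec_coeff \<alpha> \<beta> \<gamma> 1) * FJ \<alpha> \<beta> \<gamma> z else 0)"
  using jac_op_minus_eigvec_diag_part[of z n] jac_w_mult_eigvec[of "n - 1" z]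
  by (cases n) (simp_all add: jac_op_minus_eq FJ_eq_kummer_seq_0 diff_add_eq)

lemma eigvec_eventually_nonzero: "eventually (\<lambda>n. jac_eigvec \<alpha> \<beta> \<gamma> z n \<noteq> 0) sequentially"
proof -
  define a where "a = kummer_a \<alpha> \<beta> \<gamma> z"
  define b where "b = kummer_b \<beta> \<gamma> z"
  define x where "x = kummer_x \<beta> \<gamma>"
  define E where "E = (1 + norm a) * norm x * exp ((1 + norm a) * norm x)"
  have "eventually (\<lambda>n. 1 \<le> Re (b + of_nat n) \<and> E < norm (b + of_nat n)) sequentially"
    by (intro eventually_conj eventually_Re_add_nat_ge eventually_norm_add_nat_gt)
  then have "eventually (\<lambda>n. kummer_seq \<alpha> \<beta> \<gamma> z n \<noteq> 0) sequentially"
    by eventually_elim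
      (unfold kummer_seq_def, fold a_def b_def x_def, intro hyp1f1_reg_nonzero, auto simp: E_def)
  then have "eventually (\<lambda>n. kummer_seq \<alpha> \<beta> \<gamma> z (Suc n) \<noteq> 0) sequentially"
    using eventually_sequentially_Suc[of "\<lambda>n. kummer_seq \<alpha> \<beta> \<gamma> z n \<noteq> 0"] by blast
  then show ?thesis
    by eventually_elim (simp add: jac_eigvec_eq eigvec_coeff_nonzero)
qed

text \<open>The squared moduli of the eigenvector are dominated by those of
  \<open>eigvec_coeff k / Gamma (b + k)\<close>, whose consecutive ratios
  \<open>(\<alpha> + \<beta> k) / (\<gamma>\<^sup>2 |b + k|\<^sup>2)\<close> tend to 0.\<close>

lemma summable_eigvec_majorant:
  "summable (\<lambda>n. (eigvec_coeff \<alpha> \<beta> \<gamma> (Suc n) * cmod (rGamma (b + of_nat (Suc n))))\<^sup>2)"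
proof -
  have "eventually (\<lambda>n. 2 * (\<alpha> + \<beta> * real (Suc n)) \<le> \<gamma>\<^sup>2 * (Re b + real (Suc n))\<^sup>2) sequentially"
    using beta_pos gamma_pos by real_asymp
  moreover have "eventually (\<lambda>n. 1 \<le> Re (b + of_nat (Suc n))) sequentially"
    using eventually_sequentially_Suc[of "\<lambda>n. 1 \<le> Re (b + of_nat n)"] eventually_Re_add_nat_ge
    by blast
  ultimately obtain N where N: "\<And>n. n \<ge> N \<Longrightarrow>
      2 * (\<alpha> + \<beta> * real (Suc n)) \<le> \<gamma>\<^sup>2 * (Re b + real (Suc n))\<^sup>2 \<and> 1 \<le> Re (b + of_nat (Suc n))"
    using eventually_conj eventually_sequentially by (metis (no_types, lifting))
  show ?thesis
  proof (rule summable_ratio_test[where c = "1/2" and N = N])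
    fix n assume "n \<ge> N"
    define s where "s = b + of_nat (Suc n)"
    define T where "T = (eigvec_coeff \<alpha> \<beta> \<gamma> (Suc n) * cmod (rGamma s))\<^sup>2"
    have Re_s: "Re s = Re b + real (Suc n)" by (simp add: s_def)
    have "1 \<le> Re s" using N[OF \<open>n \<ge> N\<close>] by (simp add: s_def)
    have "2 * (jac_w \<alpha> \<beta> n)\<^sup>2 \<le> \<gamma>\<^sup>2 * (Re s)\<^sup>2"
      using N[OF \<open>n \<ge> N\<close>] by (simp add: jac_w_sq Re_s)
    also have "\<dots> \<le> \<gamma>\<^sup>2 * (norm s)\<^sup>2"
      using \<open>1 \<le> Re s\<close> complex_Re_le_cmod[of s] by (intro mult_left_mono power_mono) auto
    finally have "2 * (jac_w \<alpha> \<beta> n)\<^sup>2 \<le> \<gamma>\<^sup>2 * (norm s)\<^sup>2" .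
    moreover have "s \<noteq> 0" using \<open>1 \<le> Re s\<close> by auto
    ultimately have ratio: "(jac_w \<alpha> \<beta> n)\<^sup>2 / (\<gamma>\<^sup>2 * (norm s)\<^sup>2) \<le> 1/2"
      using gamma_pos by (simp add: field_simps)
    have "cmod (rGamma (b + of_nat (Suc (Suc n)))) = cmod (rGamma s) / norm s"
      using rGamma_add_nat_Suc[of b "Suc n"] \<open>s \<noteq> 0\<close> by (simp add: s_def norm_mult)
    then have "(eigvec_coeff \<alpha> \<beta> \<gamma> (Suc (Suc n)) * cmod (rGamma (b + of_nat (Suc (Suc n)))))\<^sup>2
        = (jac_w \<alpha> \<beta> n)\<^sup>2 / (\<gamma>\<^sup>2 * (norm s)\<^sup>2) * T"
      by (simp add: eigvec_coeff_Suc T_def power_mult_distrib power_divide)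
    also have "\<dots> \<le> 1/2 * T"
      using ratio by (intro mult_right_mono) (auto simp: T_def)
    finally show "norm ((eigvec_coeff \<alpha> \<beta> \<gamma> (Suc (Suc n)) * cmod (rGamma (b + of_nat (Suc (Suc n)))))\<^sup>2)
      \<le> 1/2 * norm ((eigvec_coeff \<alpha> \<beta> \<gamma> (Suc n) * cmod (rGamma (b + of_nat (Suc n))))\<^sup>2)"
      by (simp add: T_def s_def)
  qed simp
qed

lemma eigvec_l2: "jac_eigvec \<alpha> \<beta> \<gamma> z \<in> l2"
proof -
  define a where "a = kummer_a \<alpha> \<beta> \<gamma> z"
  define b where "b = kummer_b \<beta> \<gamma> z"
  define x where "x = kummer_x \<beta> \<gamma>"
  define E where "E = 1 + (1 + norm a) * norm x * exp ((1 + norm a) * norm x)"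
  have "eventually (\<lambda>n. 1 \<le> Re (b + of_nat (Suc n))) sequentially"
    using eventually_sequentially_Suc[of "\<lambda>n. 1 \<le> Re (b + of_nat n)"] eventually_Re_add_nat_ge
    by blast
  then have "eventually (\<lambda>n. norm ((cmod (jac_eigvec \<alpha> \<beta> \<gamma> z n))\<^sup>2)
      \<le> E\<^sup>2 * (eigvec_coeff \<alpha> \<beta> \<gamma> (Suc n) * cmod (rGamma (b + of_nat (Suc n))))\<^sup>2) sequentially"
  proof eventually_elim
    case (elim n)
    have "cmod (jac_eigvec \<alpha> \<beta> \<gamma> z n)
        \<le> \<bar>eigvec_coeff \<alpha> \<beta> \<gamma> (Suc n)\<bar> * (cmod (rGamma (b + of_nat (Suc n))) * E)"
      using norm_hyp1f1_reg_le[OF elim, of a x]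
      by (simp add: jac_eigvec_eq kummer_seq_def a_def b_def x_def E_def norm_mult mult_left_mono)
    then have "(cmod (jac_eigvec \<alpha> \<beta> \<gamma> z n))\<^sup>2
        \<le> (\<bar>eigvec_coeff \<alpha> \<beta> \<gamma> (Suc n)\<bar> * (cmod (rGamma (b + of_nat (Suc n))) * E))\<^sup>2"
      by (rule power_mono) simp
    then show ?case by (simp add: power_mult_distrib ac_simps)
  qed
  moreover have "summable (\<lambda>n. E\<^sup>2 * (eigvec_coeff \<alpha> \<beta> \<gamma> (Suc n) * cmod (rGamma (b + of_nat (Suc n))))\<^sup>2)"
    by (intro summable_mult summable_eigvec_majorant)
  ultimately show ?thesis
    unfolding l2_def mem_Collect_eq by (rule summable_comparison_test_ev)
qed

end

section \<open>Diagonal dominance and the tail of the Jacobi matrix\<close>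

context jacobi_params
begin

lemma eventually_diag_dominant:
  "eventually (\<lambda>n. 1 \<le> cmod (jac_diag \<gamma> z n) \<and> 4 * jac_w \<alpha> \<beta> n \<le> cmod (jac_diag \<gamma> z n)) sequentially"
proof -
  have "eventually (\<lambda>n. 4 * sqrt (\<alpha> + \<beta> * real (Suc n)) + (cmod z + 1) \<le> \<gamma> * real (Suc n)) sequentially"
    using beta_pos gamma_pos by real_asymp
  then show ?thesis
  proof eventually_elim
    case (elim n)
    have "cmod (of_real (jac_lambda \<gamma> n)) = \<gamma> * real (Suc n)"
      using gamma_pos by (simp only: norm_of_real) (simp add: jac_lambda_def)
    then have "\<gamma> * real (Suc n) - cmod z \<le> cmod (jac_diag \<gamma> z n)"
      using norm_triangle_ineq2[of "of_real (jac_lambda \<gamma> n)" z] by (simp add: jac_diag_def)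
    then show ?case using elim jac_w_pos[of n] unfolding jac_w_def by linarith
  qed
qed

end

locale jacobi_tail = jacobi_params +
  fixes z :: complex and N :: nat
  assumes N_pos: "N \<ge> 1"
    and diag_dominant: "\<And>n. n \<ge> N \<Longrightarrow>
      1 \<le> cmod (jac_diag \<gamma> z n) \<and> 4 * jac_w \<alpha> \<beta> n \<le> cmod (jac_diag \<gamma> z n)"
begin

lemma jac_diag_nonzero: "n \<ge> N \<Longrightarrow> jac_diag \<gamma> z n \<noteq> 0"
  using diag_dominant[of n] by auto

lemma norm_jac_w_div_diag_le:
  assumes "n \<ge> N" and "m \<le> n"
  shows "cmod (of_real (jac_w \<alpha> \<beta> m) / jac_diag \<gamma> z n) \<le> 1/4"
proof -
  have "4 * jac_w \<alpha> \<beta> m \<le> cmod (jac_diag \<gamma> z n)" "0 < cmod (jac_diag \<gamma> z n)"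
    using diag_dominant[OF assms(1)] jac_w_mono[OF assms(2)] by auto
  then show ?thesis using jac_w_pos[of m] by (simp add: norm_divide divide_le_eq)
qed

text \<open>A maximum principle: by diagonal dominance, no row beyond \<open>N\<close> can balance a modulus
  at the maximum of \<open>|h|\<close> against its smaller neighbours.\<close>

lemma tail_kernel_trivial:
  assumes h: "h \<in> l2" and "h (N - 1) = 0" and rows: "\<And>n. n \<ge> N \<Longrightarrow> jac_op_minus \<alpha> \<beta> \<gamma> z h n = 0"
    and "k \<ge> N"
  shows "h k = 0"
proof -
  obtain m where "m \<ge> N - 1" and max: "\<And>n. n \<ge> N - 1 \<Longrightarrow> cmod (h n) \<le> cmod (h m)"
    using LIMSEQ_zero_attains_max[OF l2_LIMSEQ_zero[OF h] norm_ge_zero, of "N - 1"] by blast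
  have "cmod (h m) = 0"
  proof (cases "m = N - 1")
    case True then show ?thesis using \<open>h (N - 1) = 0\<close> by simp
  next
    case False
    then have "m \<ge> N" "m \<noteq> 0" using \<open>m \<ge> N - 1\<close> N_pos by auto
    define S where "S = of_real (jac_w \<alpha> \<beta> (m - 1)) * h (m - 1) + of_real (jac_w \<alpha> \<beta> m) * h (Suc m)"
    have "S + jac_diag \<gamma> z m * h m = 0"
      using rows[OF \<open>m \<ge> N\<close>] \<open>m \<noteq> 0\<close> by (simp add: jac_op_minus_eq S_def add_ac)
    then have "cmod (jac_diag \<gamma> z m) * cmod (h m) = cmod S"
      by (simp add: add_eq_0_iff norm_mult[symmetric])
    also have "\<dots> \<le> jac_w \<alpha> \<beta> (m - 1) * cmod (h (m - 1)) + jac_w \<alpha> \<beta> m * cmod (h (Suc m))"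
      using norm_triangle_ineq[of "of_real (jac_w \<alpha> \<beta> (m - 1)) * h (m - 1)" "of_real (jac_w \<alpha> \<beta> m) * h (Suc m)"]
        jac_w_pos[of m] jac_w_pos[of "m - 1"]
      by (simp add: S_def norm_mult)
    also have "\<dots> \<le> (jac_w \<alpha> \<beta> (m - 1) + jac_w \<alpha> \<beta> m) * cmod (h m)"
      using max[of "m - 1"] max[of "Suc m"] \<open>m \<ge> N\<close> jac_w_pos[of m] jac_w_pos[of "m - 1"]
      by (simp add: distrib_right add_mono mult_left_mono)
    also have "\<dots> \<le> cmod (jac_diag \<gamma> z m) / 2 * cmod (h m)"
      using diag_dominant[OF \<open>m \<ge> N\<close>] jac_w_mono[of "m - 1" m]
      by (intro mult_right_mono) auto
    finally show ?thesis using jac_diag_nonzero[OF \<open>m \<ge> N\<close>] by (simp add: field_simps mult_le_0_iff)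
  qed
  then show ?thesis using max[of k] \<open>k \<ge> N\<close> by simp
qed

text \<open>Substituting \<open>s n = jac_diag \<gamma> z n * t n\<close> turns the rows \<open>n \<ge> N\<close> of \<open>(J - z) t = y\<close>, with
  \<open>t (N - 1) = 0\<close>, into the fixed point equation \<open>s = tail_cut y + tail_op s\<close>.\<close>

definition tail_coeff_prev :: "nat \<Rightarrow> complex" where
  "tail_coeff_prev n = (if N < n then of_real (jac_w \<alpha> \<beta> (n - 1)) / jac_diag \<gamma> z (n - 1) else 0)"

definition tail_coeff_next :: "nat \<Rightarrow> complex" where
  "tail_coeff_next n = (if N \<le> n then of_real (jac_w \<alpha> \<beta> n) / jac_diag \<gamma> z (Suc n) else 0)"

definition tail_op :: "(nat \<Rightarrow> complex) \<Rightarrow> nat \<Rightarrow> complex" where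
  "tail_op s n = - (tail_coeff_prev n * (if n = 0 then 0 else s (n - 1)) + tail_coeff_next n * s (Suc n))"

lemma norm_tail_coeff_prev_le: "cmod (tail_coeff_prev n) \<le> 1/4"
  using norm_jac_w_div_diag_le[of "n - 1" "n - 1"] by (simp add: tail_coeff_prev_def)

lemma norm_tail_coeff_next_le: "cmod (tail_coeff_next n) \<le> 1/4"
  using norm_jac_w_div_diag_le[of "Suc n" n] by (simp add: tail_coeff_next_def)

lemma tail_op_contraction:
  assumes s: "s \<in> l2"
  shows "tail_op s \<in> l2 \<and> l2norm (tail_op s) \<le> 1/2 * l2norm s"
proof -
  define A where "A = (\<lambda>n. tail_coeff_prev n * (if n = 0 then 0 else s (n - 1)))"
  define B where "B = (\<lambda>n. tail_coeff_next n * s (Suc n))"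
  have "A \<in> l2" "l2norm A \<le> 1/4 * l2norm (\<lambda>n. if n = 0 then 0 else s (n - 1))"
    using l2_mult_bounded[OF conjunct1[OF l2_shift_right[OF s]] norm_tail_coeff_prev_le]
    by (simp_all add: A_def)
  moreover have "B \<in> l2" "l2norm B \<le> 1/4 * l2norm (\<lambda>n. s (Suc n))"
    using l2_mult_bounded[OF conjunct1[OF l2_shift_left[OF s]] norm_tail_coeff_next_le]
    by (simp_all add: B_def)
  ultimately have AB: "(\<lambda>n. A n + B n) \<in> l2" "l2norm (\<lambda>n. A n + B n) \<le> 1/2 * l2norm s"
    using l2_add[of A B] l2_shift_right[OF s] l2_shift_left[OF s] by auto
  have "tail_op s = (\<lambda>n. (-1) * (A n + B n))"
    by (simp add: tail_op_def A_def B_def fun_eq_iff)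
  then show ?thesis
    using l2_scale[OF AB(1), of "-1"] AB(2) by simp
qed

lemma tail_op_diff: "tail_op (\<lambda>n. a n - b n) n = tail_op a n - tail_op b n"
  by (simp add: tail_op_def algebra_simps)

lemma tail_op_tendsto:
  assumes "\<And>n. (\<lambda>k. X k n) \<longlonglongrightarrow> s n"
  shows "(\<lambda>k. tail_op (X k) n) \<longlonglongrightarrow> tail_op s n"
  unfolding tail_op_def by (auto intro!: tendsto_intros assms)

definition tail_cut :: "(nat \<Rightarrow> complex) \<Rightarrow> nat \<Rightarrow> complex" where
  "tail_cut y n = (if N \<le> n then y n else 0)"

lemma tail_cut_l2: "y \<in> l2 \<Longrightarrow> tail_cut y \<in> l2 \<and> l2norm (tail_cut y) \<le> 1 * l2norm y"
  by (rule l2_dominated) (auto simp: tail_cut_def)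

primrec neumann_iter :: "(nat \<Rightarrow> complex) \<Rightarrow> nat \<Rightarrow> nat \<Rightarrow> complex" where
  "neumann_iter y 0 = tail_cut y"
| "neumann_iter y (Suc k) = (\<lambda>n. tail_cut y n + tail_op (neumann_iter y k) n)"

lemma neumann_iter_l2:
  assumes y: "y \<in> l2"
  shows "neumann_iter y k \<in> l2 \<and> l2norm (neumann_iter y k) \<le> 2 * l2norm y"
proof (induction k)
  case 0 then show ?case using tail_cut_l2[OF y] l2norm_nonneg[OF y] by simp
next
  case (Suc k)
  have K: "tail_op (neumann_iter y k) \<in> l2"
    "l2norm (tail_op (neumann_iter y k)) \<le> 1/2 * l2norm (neumann_iter y k)"
    using tail_op_contraction Suc.IH by blast+
  have "l2norm (neumann_iter y (Suc k)) \<le> l2norm (tail_cut y) + l2norm (tail_op (neumann_iter y k))"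
    and "neumann_iter y (Suc k) \<in> l2"
    using l2_add[OF conjunct1[OF tail_cut_l2[OF y]] K(1)] by simp_all
  then show ?case using tail_cut_l2[OF y] K(2) Suc.IH by linarith
qed

definition neumann_step :: "(nat \<Rightarrow> complex) \<Rightarrow> nat \<Rightarrow> nat \<Rightarrow> complex" where
  "neumann_step y k = (\<lambda>n. neumann_iter y (Suc k) n - neumann_iter y k n)"

lemma neumann_step_l2:
  assumes y: "y \<in> l2"
  shows "neumann_step y k \<in> l2 \<and> l2norm (neumann_step y k) \<le> (1/2) ^ k * (4 * l2norm y)"
proof (induction k)
  case 0
  then show ?case
    using l2_diff[OF conjunct1[OF neumann_iter_l2[OF y]] conjunct1[OF neumann_iter_l2[OF y]],
        of "Suc 0" 0] neumann_iter_l2[OF y, of "Suc 0"] neumann_iter_l2[OF y, of 0]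
    by (simp add: neumann_step_def)
next
  case (Suc k)
  have "neumann_step y (Suc k) = tail_op (neumann_step y k)"
    by (simp add: neumann_step_def tail_op_diff fun_eq_iff)
  moreover have "l2norm (tail_op (neumann_step y k)) \<le> 1/2 * ((1/2) ^ k * (4 * l2norm y))"
    using tail_op_contraction[of "neumann_step y k"] Suc by linarith
  ultimately show ?case
    using tail_op_contraction[of "neumann_step y k"] Suc by simp
qed

definition neumann_limit :: "(nat \<Rightarrow> complex) \<Rightarrow> nat \<Rightarrow> complex" where
  "neumann_limit y n = tail_cut y n + (\<Sum>k. neumann_step y k n)"

lemma LIMSEQ_neumann_iter:
  assumes y: "y \<in> l2"
  shows "(\<lambda>k. neumann_iter y k n) \<longlonglongrightarrow> neumann_limit y n"
proof -
  have partial: "neumann_iter y k n = tail_cut y n + (\<Sum>j<k. neumann_step y j n)" for k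
    by (induction k) (simp_all add: neumann_step_def)
  have bound: "norm (neumann_step y j n) \<le> (1/2) ^ j * (4 * l2norm y)" for j
    using order_trans[OF norm_le_l2norm conjunct2] neumann_step_l2[OF y, of j] by blast
  have "summable (\<lambda>j. (1/2::real) ^ j * (4 * l2norm y))"
    by (intro summable_mult2 summable_geometric) simp
  then have "summable (\<lambda>j. neumann_step y j n)"
    by (rule summable_comparison_test') (rule bound)
  then show ?thesis using partial
    unfolding neumann_limit_def by (auto intro: tendsto_add summable_LIMSEQ)
qed

lemma neumann_limit_l2: "y \<in> l2 \<Longrightarrow> neumann_limit y \<in> l2 \<and> l2norm (neumann_limit y) \<le> 2 * l2norm y"
  by (rule l2_pointwise_limit[where X = "neumann_iter y"])
     (use neumann_iter_l2 LIMSEQ_neumann_iter in auto)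

lemma neumann_limit_fixpoint:
  assumes y: "y \<in> l2"
  shows "neumann_limit y n = tail_cut y n + tail_op (neumann_limit y) n"
proof (rule LIMSEQ_unique)
  show "(\<lambda>k. neumann_iter y (Suc k) n) \<longlonglongrightarrow> neumann_limit y n"
    using LIMSEQ_neumann_iter[OF y] by (rule LIMSEQ_Suc)
  show "(\<lambda>k. neumann_iter y (Suc k) n) \<longlonglongrightarrow> tail_cut y n + tail_op (neumann_limit y) n"
    by (simp only: neumann_iter.simps) (intro tendsto_intros tail_op_tendsto LIMSEQ_neumann_iter[OF y])
qed

lemma tail_solution:
  assumes y: "y \<in> l2"
  obtains t where "t \<in> l2" "\<And>n. n < N \<Longrightarrow> t n = 0"
    "\<And>n. n \<ge> N \<Longrightarrow> jac_op_minus \<alpha> \<beta> \<gamma> z t n = y n" "l2norm t \<le> 2 * l2norm y"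
proof -
  define s where "s = neumann_limit y"
  define t where "t = (\<lambda>n. if N \<le> n then s n / jac_diag \<gamma> z n else 0)"
  have s: "s \<in> l2" "l2norm s \<le> 2 * l2norm y" using neumann_limit_l2[OF y] by (auto simp: s_def)
  have "cmod (t n) \<le> 1 * cmod (s n)" for n
  proof (cases "N \<le> n")
    case True
    then have "cmod (s n) / cmod (jac_diag \<gamma> z n) \<le> cmod (s n) / 1"
      using diag_dominant[of n] by (intro divide_left_mono) auto
    then show ?thesis using True by (simp add: t_def norm_divide)
  qed (simp add: t_def)
  then have t: "t \<in> l2" "l2norm t \<le> 2 * l2norm y"
    using l2_dominated[OF s(1), of t 1] s(2) by auto
  have "jac_op_minus \<alpha> \<beta> \<gamma> z t n = y n" if "N \<le> n" for n
  proof -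
    have "jac_op_minus \<alpha> \<beta> \<gamma> z t n = s n - tail_op s n"
      using that N_pos jac_diag_nonzero[OF that]
      by (auto simp: jac_op_minus_eq t_def tail_op_def tail_coeff_prev_def tail_coeff_next_def)
    then show ?thesis using neumann_limit_fixpoint[OF y, of n] that by (simp add: s_def tail_cut_def)
  qed
  then show ?thesis using that t by (simp add: t_def)
qed

end

section \<open>Back substitution\<close>

definition l2_pair_bounded :: "((nat \<Rightarrow> complex) \<Rightarrow> (nat \<Rightarrow> complex) \<Rightarrow> complex) \<Rightarrow> bool" where
  "l2_pair_bounded f \<longleftrightarrow> (\<exists>C. \<forall>y\<in>l2. \<forall>t\<in>l2. cmod (f y t) \<le> C * (l2norm y + l2norm t))"

lemma l2_pair_bounded_fst: "l2_pair_bounded (\<lambda>y t. y m)"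
  unfolding l2_pair_bounded_def
  by (rule exI[of _ 1]) (auto intro: order_trans[OF norm_le_l2norm] simp: l2norm_nonneg)

lemma l2_pair_bounded_snd: "l2_pair_bounded (\<lambda>y t. t m)"
  unfolding l2_pair_bounded_def
  by (rule exI[of _ 1]) (auto intro: order_trans[OF norm_le_l2norm] simp: l2norm_nonneg)

lemma l2_pair_bounded_diff:
  assumes "l2_pair_bounded f" and "l2_pair_bounded g"
  shows "l2_pair_bounded (\<lambda>y t. f y t - g y t)"
proof -
  obtain C D where C: "\<forall>y\<in>l2. \<forall>t\<in>l2. cmod (f y t) \<le> C * (l2norm y + l2norm t)"
    and D: "\<forall>y\<in>l2. \<forall>t\<in>l2. cmod (g y t) \<le> D * (l2norm y + l2norm t)"
    using assms unfolding l2_pair_bounded_def by blast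
  have "cmod (f y t - g y t) \<le> (C + D) * (l2norm y + l2norm t)" if "y \<in> l2" "t \<in> l2" for y t
  proof -
    have "cmod (f y t - g y t) \<le> cmod (f y t) + cmod (g y t)" by (rule norm_triangle_ineq4)
    also have "\<dots> \<le> C * (l2norm y + l2norm t) + D * (l2norm y + l2norm t)"
      using that C D by (intro add_mono) auto
    finally show ?thesis by (simp add: distrib_right)
  qed
  then show ?thesis unfolding l2_pair_bounded_def by blast
qed

lemma l2_pair_bounded_mult:
  assumes "l2_pair_bounded f"
  shows "l2_pair_bounded (\<lambda>y t. c * f y t)"
proof -
  obtain C where "\<forall>y\<in>l2. \<forall>t\<in>l2. cmod (f y t) \<le> C * (l2norm y + l2norm t)"
    using assms by (auto simp: l2_pair_bounded_def)
  then show ?thesis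
    unfolding l2_pair_bounded_def
    by (intro exI[of _ "cmod c * C"]) (auto simp: norm_mult mult.assoc intro: mult_left_mono)
qed

lemma l2_pair_bounded_divide:
  assumes "l2_pair_bounded f"
  shows "l2_pair_bounded (\<lambda>y t. f y t / c)"
  using l2_pair_bounded_mult[OF assms, of "inverse c"] by (simp add: field_simps)

lemma l2_pair_bounded_sum_norm:
  fixes f :: "nat \<Rightarrow> (nat \<Rightarrow> complex) \<Rightarrow> (nat \<Rightarrow> complex) \<Rightarrow> complex"
  assumes "\<And>j. l2_pair_bounded (f j)"
  shows "\<exists>C. \<forall>y\<in>l2. \<forall>t\<in>l2. (\<Sum>j<K. cmod (f j y t)) \<le> C * (l2norm y + l2norm t)"
proof (induction K)
  case 0 then show ?case by (intro exI[of _ 0]) simp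
next
  case (Suc K)
  obtain C where "\<forall>y\<in>l2. \<forall>t\<in>l2. (\<Sum>j<K. cmod (f j y t)) \<le> C * (l2norm y + l2norm t)"
    using Suc.IH by blast
  moreover obtain D where "\<forall>y\<in>l2. \<forall>t\<in>l2. cmod (f K y t) \<le> D * (l2norm y + l2norm t)"
    using assms[of K] by (auto simp: l2_pair_bounded_def)
  ultimately show ?case
    by (intro exI[of _ "C + D"]) (auto simp: distrib_right intro: add_mono)
qed

text \<open>Given the tail \<open>t\<close> beyond \<open>M\<close> (with \<open>t M = 0\<close>), \<open>back_subst \<dots> j\<close> is the value at
  position \<open>M - j\<close> obtained by solving the rows \<open>M, M - 1, \<dots>\<close> of \<open>(J - z) x = y\<close> downwards.\<close>

fun back_subst ::
  "real \<Rightarrow> real \<Rightarrow> real \<Rightarrow> complex \<Rightarrow> nat \<Rightarrow> (nat \<Rightarrow> complex) \<Rightarrow> (nat \<Rightarrow> complex) \<Rightarrow> nat \<Rightarrow> complex"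
where
  "back_subst \<alpha> \<beta> \<gamma> z M y t 0 = 0"
| "back_subst \<alpha> \<beta> \<gamma> z M y t (Suc 0) =
     (y M - of_real (jac_w \<alpha> \<beta> M) * t (Suc M)) / of_real (jac_w \<alpha> \<beta> (M - 1))"
| "back_subst \<alpha> \<beta> \<gamma> z M y t (Suc (Suc j)) =
     (y (M - 1 - j) - jac_diag \<gamma> z (M - 1 - j) * back_subst \<alpha> \<beta> \<gamma> z M y t (Suc j)
      - of_real (jac_w \<alpha> \<beta> (M - 1 - j)) * back_subst \<alpha> \<beta> \<gamma> z M y t j) / of_real (jac_w \<alpha> \<beta> (M - 2 - j))"

lemma l2_pair_bounded_back_subst: "l2_pair_bounded (\<lambda>y t. back_subst \<alpha> \<beta> \<gamma> z M y t j)"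
proof -
  have "l2_pair_bounded (\<lambda>y t. back_subst \<alpha> \<beta> \<gamma> z M y t j)
      \<and> l2_pair_bounded (\<lambda>y t. back_subst \<alpha> \<beta> \<gamma> z M y t (Suc j))"
  proof (induction j)
    case 0
    have "l2_pair_bounded (\<lambda>y t. back_subst \<alpha> \<beta> \<gamma> z M y t 0)"
      unfolding l2_pair_bounded_def by (intro exI[of _ 0]) simp
    moreover have "l2_pair_bounded (\<lambda>y t. back_subst \<alpha> \<beta> \<gamma> z M y t (Suc 0))"
      unfolding back_subst.simps
      by (intro l2_pair_bounded_divide l2_pair_bounded_diff l2_pair_bounded_mult
            l2_pair_bounded_fst l2_pair_bounded_snd)
    ultimately show ?case ..
  next
    case (Suc j)
    then have "l2_pair_bounded (\<lambda>y t. back_subst \<alpha> \<beta> \<gamma> z M y t (Suc (Suc j)))"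
      unfolding back_subst.simps(3)
      by (intro l2_pair_bounded_divide l2_pair_bounded_diff l2_pair_bounded_mult
            l2_pair_bounded_fst) auto
    with Suc show ?case by blast
  qed
  then show ?thesis ..
qed

lemma back_subst_l2:
  "\<exists>C\<ge>0. \<forall>y\<in>l2. \<forall>t\<in>l2.
     (\<lambda>n. if n \<le> M then back_subst \<alpha> \<beta> \<gamma> z M y t (M - n) else 0) \<in> l2
     \<and> l2norm (\<lambda>n. if n \<le> M then back_subst \<alpha> \<beta> \<gamma> z M y t (M - n) else 0) \<le> C * (l2norm y + l2norm t)"
proof -
  obtain C where C: "\<forall>y\<in>l2. \<forall>t\<in>l2.
      (\<Sum>j<Suc M. cmod (back_subst \<alpha> \<beta> \<gamma> z M y t j)) \<le> C * (l2norm y + l2norm t)"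
    using l2_pair_bounded_sum_norm[of "\<lambda>j y t. back_subst \<alpha> \<beta> \<gamma> z M y t j" "Suc M"]
      l2_pair_bounded_back_subst by blast
  have "(\<lambda>n. if n \<le> M then back_subst \<alpha> \<beta> \<gamma> z M y t (M - n) else 0) \<in> l2
      \<and> l2norm (\<lambda>n. if n \<le> M then back_subst \<alpha> \<beta> \<gamma> z M y t (M - n) else 0) \<le> max C 0 * (l2norm y + l2norm t)"
    if "y \<in> l2" "t \<in> l2" for y t
  proof -
    have "(\<Sum>n<Suc M. cmod (if n \<le> M then back_subst \<alpha> \<beta> \<gamma> z M y t (M - n) else 0))
        = (\<Sum>j<Suc M. cmod (back_subst \<alpha> \<beta> \<gamma> z M y t j))"
      by (rule sum.reindex_bij_witness[of _ "\<lambda>j. M - j" "\<lambda>n. M - n"]) auto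
    also have "\<dots> \<le> C * (l2norm y + l2norm t)" using C that by blast
    also have "\<dots> \<le> max C 0 * (l2norm y + l2norm t)"
      using l2norm_nonneg[OF that(1)] l2norm_nonneg[OF that(2)] by (intro mult_right_mono) auto
    finally have "(\<Sum>n<Suc M. cmod (if n \<le> M then back_subst \<alpha> \<beta> \<gamma> z M y t (M - n) else 0))
        \<le> max C 0 * (l2norm y + l2norm t)" .
    moreover have "(\<lambda>n. if n \<le> M then back_subst \<alpha> \<beta> \<gamma> z M y t (M - n) else 0) \<in> l2
        \<and> l2norm (\<lambda>n. if n \<le> M then back_subst \<alpha> \<beta> \<gamma> z M y t (M - n) else 0)
          \<le> (\<Sum>n<Suc M. cmod (if n \<le> M then back_subst \<alpha> \<beta> \<gamma> z M y t (M - n) else 0))"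
      by (rule l2_finite_support) simp
    ultimately show ?thesis by linarith
  qed
  then show ?thesis by (intro exI[of _ "max C 0"]) simp
qed

context jacobi_params
begin

lemma back_subst_row:
  assumes "1 \<le> n" and "n < M"
  shows "of_real (jac_w \<alpha> \<beta> (n - 1)) * back_subst \<alpha> \<beta> \<gamma> z M y t (M - (n - 1))
         + jac_diag \<gamma> z n * back_subst \<alpha> \<beta> \<gamma> z M y t (M - n)
         + of_real (jac_w \<alpha> \<beta> n) * back_subst \<alpha> \<beta> \<gamma> z M y t (M - Suc n) = y n"
proof -
  define j where "j = M - 1 - n"
  have j: "M - (n - 1) = Suc (Suc j)" "M - n = Suc j" "M - Suc n = j" "M - 1 - j = n" "M - 2 - j = n - 1"
    using assms by (auto simp: j_def)
  have "of_real (jac_w \<alpha> \<beta> (n - 1)) \<noteq> (0 :: complex)" using jac_w_pos[of "n - 1"] by simp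
  then show ?thesis unfolding j(1-3) back_subst.simps(3) j(4,5) by simp
qed

lemma jac_op_minus_back_subst:
  assumes "M \<ge> 1" and "t M = 0" and tail: "\<And>n. M < n \<Longrightarrow> jac_op_minus \<alpha> \<beta> \<gamma> z t n = y n"
    and "n \<ge> 1"
  shows "jac_op_minus \<alpha> \<beta> \<gamma> z (\<lambda>n. if M < n then t n else back_subst \<alpha> \<beta> \<gamma> z M y t (M - n)) n = y n"
proof -
  define x where "x = (\<lambda>n. if M < n then t n else back_subst \<alpha> \<beta> \<gamma> z M y t (M - n))"
  consider "n = M" | "n < M" | "M < n" by linarith
  then have "jac_op_minus \<alpha> \<beta> \<gamma> z x n = y n"
  proof cases
    case 1
    have "M - (M - 1) = Suc 0" "\<not> M < M - 1" using \<open>M \<ge> 1\<close> by simp_all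
    then show ?thesis using 1 \<open>M \<ge> 1\<close> jac_w_pos[of "M - 1"] by (simp add: jac_op_minus_eq x_def)
  next
    case 2
    have "\<not> M < n - 1" using 2 by linarith
    then have "x (n - 1) = back_subst \<alpha> \<beta> \<gamma> z M y t (M - (n - 1))" by (simp only: x_def if_False)
    moreover have "x n = back_subst \<alpha> \<beta> \<gamma> z M y t (M - n)"
      and "x (Suc n) = back_subst \<alpha> \<beta> \<gamma> z M y t (M - Suc n)"
      using 2 by (simp_all add: x_def)
    ultimately show ?thesis
      using back_subst_row[OF \<open>n \<ge> 1\<close> 2, where z = z and y = y and t = t] \<open>n \<ge> 1\<close>
      by (simp add: jac_op_minus_eq)
  next
    case 3
    have "x k = t k" if "k \<ge> M" for k
      using that \<open>t M = 0\<close> by (cases "k = M") (auto simp: x_def)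
    then show ?thesis using 3 tail[OF 3] by (simp add: jac_op_minus_eq)
  qed
  then show ?thesis by (simp add: x_def)
qed

lemma eventually_jacobi_tail: "eventually (\<lambda>N. jacobi_tail \<alpha> \<beta> \<gamma> z N) sequentially"
proof -
  obtain N0 where "\<And>n. n \<ge> N0 \<Longrightarrow>
      1 \<le> cmod (jac_diag \<gamma> z n) \<and> 4 * jac_w \<alpha> \<beta> n \<le> cmod (jac_diag \<gamma> z n)"
    using eventually_diag_dominant[of z] by (auto simp: eventually_sequentially)
  then have "jacobi_tail \<alpha> \<beta> \<gamma> z N" if "N \<ge> max N0 1" for N
    using that by unfold_locales auto
  then show ?thesis unfolding eventually_sequentially by blast
qed

lemma solve_rows_ge_1:
  "\<exists>C. \<forall>y\<in>l2. \<exists>x\<in>l2. (\<forall>n\<ge>1. jac_op_minus \<alpha> \<beta> \<gamma> z x n = y n) \<and> l2norm x \<le> C * l2norm y"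
proof -
  obtain N where tail: "jacobi_tail \<alpha> \<beta> \<gamma> z N" and "N \<ge> 2"
    using eventually_conj[OF eventually_jacobi_tail[of z] eventually_ge_at_top[of 2]]
    by (auto simp: eventually_sequentially)
  interpret jacobi_tail \<alpha> \<beta> \<gamma> z N by (rule tail)
  define M where "M = N - 1"
  obtain C where "C \<ge> 0" and C: "\<And>y t. y \<in> l2 \<Longrightarrow> t \<in> l2 \<Longrightarrow>
      (\<lambda>n. if n \<le> M then back_subst \<alpha> \<beta> \<gamma> z M y t (M - n) else 0) \<in> l2
      \<and> l2norm (\<lambda>n. if n \<le> M then back_subst \<alpha> \<beta> \<gamma> z M y t (M - n) else 0) \<le> C * (l2norm y + l2norm t)"
    using back_subst_l2[where M = M and z = z] by blast
  have "\<exists>x\<in>l2. (\<forall>n\<ge>1. jac_op_minus \<alpha> \<beta> \<gamma> z x n = y n) \<and> l2norm x \<le> (3 * C + 2) * l2norm y"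
    if y: "y \<in> l2" for y
  proof -
    obtain t where t: "t \<in> l2" "\<And>n. n < N \<Longrightarrow> t n = 0"
      "\<And>n. n \<ge> N \<Longrightarrow> jac_op_minus \<alpha> \<beta> \<gamma> z t n = y n" "l2norm t \<le> 2 * l2norm y"
      using tail_solution[OF y] by blast
    define f where "f = (\<lambda>n. if n \<le> M then back_subst \<alpha> \<beta> \<gamma> z M y t (M - n) else 0)"
    define x where "x = (\<lambda>n. if M < n then t n else back_subst \<alpha> \<beta> \<gamma> z M y t (M - n))"
    have "x n = f n + t n" for n
      using t(2)[of n] \<open>N \<ge> 2\<close> by (auto simp: x_def f_def M_def)
    then have "x = (\<lambda>n. f n + t n)" by blast
    then have "x \<in> l2" "l2norm x \<le> C * (l2norm y + l2norm t) + l2norm t"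
      using l2_add[of f t] C[OF y t(1)] t(1) by (auto simp: f_def)
    moreover have "C * (l2norm y + l2norm t) + l2norm t \<le> (3 * C + 2) * l2norm y"
      using t(4) \<open>C \<ge> 0\<close> mult_left_mono[of "l2norm t" "2 * l2norm y" C] by (simp add: algebra_simps)
    moreover have "jac_op_minus \<alpha> \<beta> \<gamma> z x n = y n" if "n \<ge> 1" for n
      unfolding x_def using \<open>N \<ge> 2\<close> t(2,3) that
      by (intro jac_op_minus_back_subst) (auto simp: M_def)
    ultimately show ?thesis by (intro bexI[of _ x]) auto
  qed
  then show ?thesis by blast
qed

lemma jac_op_minus_zero_backwards:
  assumes "\<And>n. n \<ge> M \<Longrightarrow> g n = 0" and "\<And>n. n \<ge> 1 \<Longrightarrow> jac_op_minus \<alpha> \<beta> \<gamma> z g n = 0"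
  shows "g n = 0"
proof -
  have "\<forall>n\<ge>M - j. g n = 0" for j
  proof (induction j)
    case (Suc j)
    show ?case
    proof (cases "M - j = 0")
      case False
      define k where "k = M - j"
      have "g k = 0" "g (Suc k) = 0" using Suc.IH by (auto simp: k_def)
      then have "of_real (jac_w \<alpha> \<beta> (k - 1)) * g (k - 1) = 0"
        using assms(2)[of k] False by (simp add: jac_op_minus_eq k_def)
      then have "g (k - 1) = 0" using jac_w_pos[of "k - 1"] by simp
      have "n = k - 1 \<or> n \<ge> k" if "n \<ge> M - Suc j" for n
        using that False by (simp add: k_def) linarith
      then show ?thesis using \<open>g (k - 1) = 0\<close> Suc.IH k_def by auto
    qed (use Suc.IH in simp)
  qed (use assms(1) in simp)
  from this[of M] show ?thesis by simp
qed

end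

section \<open>The spectrum\<close>

lemma jac_dom_iff_jac_op_minus_l2:
  assumes "x \<in> l2"
  shows "x \<in> jac_dom \<alpha> \<beta> \<gamma> \<longleftrightarrow> jac_op_minus \<alpha> \<beta> \<gamma> z x \<in> l2"
proof -
  have "(\<lambda>n. z * x n) \<in> l2" using l2_scale[OF assms] by blast
  moreover have "jac_op_minus \<alpha> \<beta> \<gamma> z x = (\<lambda>n. jac_op \<alpha> \<beta> \<gamma> x n - z * x n)"
    and "jac_op \<alpha> \<beta> \<gamma> x = (\<lambda>n. jac_op_minus \<alpha> \<beta> \<gamma> z x n - (- z) * x n)"
    by (simp_all add: jac_op_minus_def fun_eq_iff)
  moreover have "(\<lambda>n. (- z) * x n) \<in> l2" using l2_scale[OF assms] by blast
  ultimately show ?thesis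
    using assms l2_diff[of "jac_op \<alpha> \<beta> \<gamma> x" "\<lambda>n. z * x n"]
      l2_diff[of "jac_op_minus \<alpha> \<beta> \<gamma> z x" "\<lambda>n. (- z) * x n"]
    by (auto simp: jac_dom_def)
qed

lemma eigenvalue_in_spectrum:
  assumes "jac_eigenvalue \<alpha> \<beta> \<gamma> z"
  shows "z \<in> jac_spectrum \<alpha> \<beta> \<gamma>"
  unfolding jac_spectrum_def
proof
  assume "z \<in> jac_resolvent \<alpha> \<beta> \<gamma>"
  then obtain C where C: "\<forall>x\<in>jac_dom \<alpha> \<beta> \<gamma>. l2norm x \<le> C * l2norm (\<lambda>n. jac_op \<alpha> \<beta> \<gamma> x n - z * x n)"
    by (auto simp: jac_resolvent_def)
  obtain x where x: "x \<in> jac_dom \<alpha> \<beta> \<gamma>" "x \<noteq> (\<lambda>_. 0)" "\<And>n. jac_op \<alpha> \<beta> \<gamma> x n = z * x n"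
    using assms by (auto simp: jac_eigenvalue_def)
  have "l2norm x \<le> C * l2norm (\<lambda>n. jac_op \<alpha> \<beta> \<gamma> x n - z * x n)" using C x(1) by blast
  then have "l2norm x \<le> 0" using x(3) by (simp add: l2norm_def)
  moreover have "l2norm x > 0" using x by (intro l2norm_pos) (auto simp: jac_dom_def)
  ultimately show False by simp
qed

context jacobi_params
begin

lemma eigvec_is_eigenvector:
  assumes "FJ \<alpha> \<beta> \<gamma> z = 0"
  shows "jac_eigvec \<alpha> \<beta> \<gamma> z \<in> jac_dom \<alpha> \<beta> \<gamma> \<and> jac_eigvec \<alpha> \<beta> \<gamma> z \<noteq> (\<lambda>_. 0)
    \<and> (\<forall>n. jac_op \<alpha> \<beta> \<gamma> (jac_eigvec \<alpha> \<beta> \<gamma> z) n = z * jac_eigvec \<alpha> \<beta> \<gamma> z n)"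
proof -
  have eq: "jac_op_minus \<alpha> \<beta> \<gamma> z (jac_eigvec \<alpha> \<beta> \<gamma> z) = (\<lambda>_. 0)"
    using assms by (simp add: jac_op_minus_eigvec fun_eq_iff)
  moreover have "(\<lambda>_. 0) \<in> l2" by (simp add: l2_def)
  ultimately have "jac_eigvec \<alpha> \<beta> \<gamma> z \<in> jac_dom \<alpha> \<beta> \<gamma>"
    using jac_dom_iff_jac_op_minus_l2[OF eigvec_l2, where z = z] by simp
  moreover have "jac_eigvec \<alpha> \<beta> \<gamma> z \<noteq> (\<lambda>_. 0)"
    using eventually_happens[OF eigvec_eventually_nonzero[of z]] by auto
  ultimately show ?thesis using eq by (simp add: jac_op_minus_def fun_eq_iff)
qed

text \<open>If \<open>FJ z \<noteq> 0\<close>, the only square-summable solution of \<open>(J - z) h = 0\<close> is zero: subtracting a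
  multiple of the eigenvector candidate makes \<open>h\<close> vanish at \<open>N - 1\<close>, the maximum principle then
  kills the tail, back substitution the rest, and the first row forces the multiple to be zero.\<close>

lemma jac_op_minus_kernel_trivial:
  assumes F: "FJ \<alpha> \<beta> \<gamma> z \<noteq> 0" and h: "h \<in> l2" and rows: "\<And>n. jac_op_minus \<alpha> \<beta> \<gamma> z h n = 0"
  shows "h = (\<lambda>_. 0)"
proof -
  define u where "u = jac_eigvec \<alpha> \<beta> \<gamma> z"
  have u_ev: "eventually (\<lambda>N. u (N - 1) \<noteq> 0) sequentially"
    using eventually_sequentially_Suc[of "\<lambda>N. u (N - 1) \<noteq> 0"] eigvec_eventually_nonzero[of z]
    by (simp add: u_def)
  then obtain N where tail: "jacobi_tail \<alpha> \<beta> \<gamma> z N" and "u (N - 1) \<noteq> 0"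
    using eventually_conj[OF eventually_jacobi_tail[of z] u_ev] unfolding eventually_sequentially by blast
  interpret jacobi_tail \<alpha> \<beta> \<gamma> z N by (rule tail)
  define c where "c = h (N - 1) / u (N - 1)"
  define g where "g = (\<lambda>n. h n - c * u n)"
  have defect_g: "jac_op_minus \<alpha> \<beta> \<gamma> z g n
      = - c * (if n = 0 then of_real (\<gamma> * eigvec_coeff \<alpha> \<beta> \<gamma> 1) * FJ \<alpha> \<beta> \<gamma> z else 0)" for n
    by (simp add: g_def jac_op_minus_linear rows u_def jac_op_minus_eigvec)
  have "g \<in> l2" using l2_diff[OF h conjunct1[OF l2_scale[OF eigvec_l2]]] by (simp add: g_def u_def)
  moreover have "g (N - 1) = 0" using \<open>u (N - 1) \<noteq> 0\<close> by (simp add: g_def c_def)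
  ultimately have "g n = 0" if "n \<ge> N" for n
    using tail_kernel_trivial[of g n] defect_g that N_pos by simp
  with \<open>g (N - 1) = 0\<close> have "g n = 0" if "n \<ge> N - 1" for n
    using that by (cases "n = N - 1") auto
  moreover have "jac_op_minus \<alpha> \<beta> \<gamma> z g n = 0" if "n \<ge> 1" for n
    using defect_g[of n] that by simp
  ultimately have "g n = 0" for n by (rule jac_op_minus_zero_backwards)
  then have "g = (\<lambda>_. 0)" by blast
  then have "c = 0"
    using defect_g[of 0] F eigvec_coeff_nonzero[of 1] gamma_pos by (simp add: jac_op_minus_eq)
  with \<open>g = (\<lambda>_. 0)\<close> show ?thesis by (simp add: g_def)
qed

lemma norm_first_row_residual_le:
  assumes "x \<in> l2" and "y \<in> l2" and "l2norm x \<le> C * l2norm y"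
  shows "cmod (jac_op_minus \<alpha> \<beta> \<gamma> z x 0 - y 0)
           \<le> ((cmod (jac_diag \<gamma> z 0) + jac_w \<alpha> \<beta> 0) * C + 1) * l2norm y"
proof -
  define D where "D = cmod (jac_diag \<gamma> z 0) + jac_w \<alpha> \<beta> 0"
  have "D \<ge> 0" using jac_w_pos[of 0] by (simp add: D_def)
  have "cmod (jac_op_minus \<alpha> \<beta> \<gamma> z x 0 - y 0)
      \<le> cmod (jac_diag \<gamma> z 0) * cmod (x 0) + jac_w \<alpha> \<beta> 0 * cmod (x 1) + cmod (y 0)"
    using norm_triangle_ineq[of "jac_diag \<gamma> z 0 * x 0" "of_real (jac_w \<alpha> \<beta> 0) * x 1"]
      norm_triangle_ineq4[of "jac_op_minus \<alpha> \<beta> \<gamma> z x 0" "y 0"] jac_w_pos[of 0]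
    by (simp add: jac_op_minus_eq norm_mult)
  also have "\<dots> \<le> D * l2norm x + l2norm y"
    using norm_le_l2norm[OF assms(1)] norm_le_l2norm[OF assms(2)] jac_w_pos[of 0]
    by (simp add: D_def distrib_right add_mono mult_left_mono)
  also have "\<dots> \<le> D * (C * l2norm y) + l2norm y"
    using assms(3) \<open>D \<ge> 0\<close> by (simp add: mult_left_mono)
  finally show ?thesis by (simp add: D_def algebra_simps)
qed

text \<open>The first row is fixed up with a multiple of the eigenvector candidate, whose own defect there
  is a nonzero multiple of \<open>FJ z\<close>.\<close>

lemma solve_all_rows:
  assumes F: "FJ \<alpha> \<beta> \<gamma> z \<noteq> 0"
  shows "\<exists>C. \<forall>y\<in>l2. \<exists>x\<in>l2. jac_op_minus \<alpha> \<beta> \<gamma> z x = y \<and> l2norm x \<le> C * l2norm y"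
proof -
  obtain C where C: "\<forall>y\<in>l2. \<exists>x\<in>l2. (\<forall>n\<ge>1. jac_op_minus \<alpha> \<beta> \<gamma> z x n = y n) \<and> l2norm x \<le> C * l2norm y"
    using solve_rows_ge_1 by blast
  define u where "u = jac_eigvec \<alpha> \<beta> \<gamma> z"
  define r where "r = of_real (\<gamma> * eigvec_coeff \<alpha> \<beta> \<gamma> 1) * FJ \<alpha> \<beta> \<gamma> z"
  define D where "D = cmod (jac_diag \<gamma> z 0) + jac_w \<alpha> \<beta> 0"
  have "r \<noteq> 0" using F eigvec_coeff_nonzero[of 1] gamma_pos by (simp add: r_def)
  have "\<exists>x\<in>l2. jac_op_minus \<alpha> \<beta> \<gamma> z x = y \<and> l2norm x \<le> (C + (D * C + 1) / cmod r * l2norm u) * l2norm y"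
    if y: "y \<in> l2" for y
  proof -
    obtain x1 where x1: "x1 \<in> l2" "\<And>n. n \<ge> 1 \<Longrightarrow> jac_op_minus \<alpha> \<beta> \<gamma> z x1 n = y n" "l2norm x1 \<le> C * l2norm y"
      using C y by blast
    define \<rho> where "\<rho> = (jac_op_minus \<alpha> \<beta> \<gamma> z x1 0 - y 0) / r"
    define x where "x = (\<lambda>n. x1 n - \<rho> * u n)"
    have "jac_op_minus \<alpha> \<beta> \<gamma> z x n = jac_op_minus \<alpha> \<beta> \<gamma> z x1 n - \<rho> * (if n = 0 then r else 0)" for n
      unfolding x_def jac_op_minus_linear by (simp add: u_def jac_op_minus_eigvec r_def)
    then have "jac_op_minus \<alpha> \<beta> \<gamma> z x n = y n" for n
      using x1(2)[of n] \<open>r \<noteq> 0\<close> by (cases "n = 0") (simp_all add: \<rho>_def)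
    moreover have "cmod (\<rho> * r) \<le> (D * C + 1) * l2norm y"
      using norm_first_row_residual_le[OF x1(1) y x1(3)] \<open>r \<noteq> 0\<close> by (simp add: \<rho>_def D_def)
    then have "cmod \<rho> * l2norm u \<le> (D * C + 1) / cmod r * l2norm y * l2norm u"
      using \<open>r \<noteq> 0\<close> l2norm_nonneg[OF eigvec_l2, of z]
      by (intro mult_right_mono) (auto simp: u_def norm_mult field_simps)
    moreover have "x \<in> l2" "l2norm x \<le> l2norm x1 + cmod \<rho> * l2norm u"
      using l2_diff[OF x1(1) conjunct1[OF l2_scale[OF eigvec_l2]], of \<rho> z]
        l2_scale[OF eigvec_l2, of \<rho> z] by (auto simp: x_def u_def)
    ultimately show ?thesis
      using x1(3) by (intro bexI[of _ x]) (auto simp: fun_eq_iff algebra_simps)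
  qed
  then show ?thesis by blast
qed

lemma resolvent_if_FJ_nonzero:
  assumes F: "FJ \<alpha> \<beta> \<gamma> z \<noteq> 0"
  shows "z \<in> jac_resolvent \<alpha> \<beta> \<gamma>"
proof -
  obtain C where C: "\<forall>y\<in>l2. \<exists>x\<in>l2. jac_op_minus \<alpha> \<beta> \<gamma> z x = y \<and> l2norm x \<le> C * l2norm y"
    using solve_all_rows[OF F] by blast
  have "\<exists>x\<in>jac_dom \<alpha> \<beta> \<gamma>. jac_op_minus \<alpha> \<beta> \<gamma> z x = y" if "y \<in> l2" for y
    using C that jac_dom_iff_jac_op_minus_l2 by metis
  moreover have "l2norm x \<le> C * l2norm (jac_op_minus \<alpha> \<beta> \<gamma> z x)" if x: "x \<in> jac_dom \<alpha> \<beta> \<gamma>" for x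
  proof -
    have "x \<in> l2" "jac_op_minus \<alpha> \<beta> \<gamma> z x \<in> l2"
      using x jac_dom_iff_jac_op_minus_l2[of x] by (auto simp: jac_dom_def)
    then obtain x' where x': "x' \<in> l2" "jac_op_minus \<alpha> \<beta> \<gamma> z x' = jac_op_minus \<alpha> \<beta> \<gamma> z x"
      "l2norm x' \<le> C * l2norm (jac_op_minus \<alpha> \<beta> \<gamma> z x)"
      using C by blast
    have "(\<lambda>n. x n - 1 * x' n) = (\<lambda>_. 0)"
      using jac_op_minus_linear[where z = z and x = x and c = 1 and y = x'] x'(2) l2_diff[OF \<open>x \<in> l2\<close> x'(1)]
      by (intro jac_op_minus_kernel_trivial[OF F]) auto
    then have "x = x'" by (simp add: fun_eq_iff)
    with x'(3) show ?thesis by simp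
  qed
  ultimately show ?thesis
    unfolding jac_resolvent_def jac_op_minus_def[abs_def] by blast
qed

lemma FJ_zero_if_eigenvalue:
  assumes "jac_eigenvalue \<alpha> \<beta> \<gamma> z"
  shows "FJ \<alpha> \<beta> \<gamma> z = 0"
proof (rule ccontr)
  assume "FJ \<alpha> \<beta> \<gamma> z \<noteq> 0"
  obtain x where "x \<in> jac_dom \<alpha> \<beta> \<gamma>" "x \<noteq> (\<lambda>_. 0)" "\<And>n. jac_op \<alpha> \<beta> \<gamma> x n = z * x n"
    using assms by (auto simp: jac_eigenvalue_def)
  then show False
    using jac_op_minus_kernel_trivial[OF \<open>FJ \<alpha> \<beta> \<gamma> z \<noteq> 0\<close>, of x] by (simp add: jac_dom_def jac_op_minus_def)
qed

end

theorem mainTheorem4: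
  fixes \<alpha> \<beta> \<gamma> :: real
  assumes "\<beta> > 0" and "\<gamma> > 0" and "\<alpha> + \<beta> > 0"
  shows "(\<forall>z. z \<in> jac_spectrum \<alpha> \<beta> \<gamma> \<longleftrightarrow> FJ \<alpha> \<beta> \<gamma> z = 0) \<and>
         (\<forall>z. jac_eigenvalue \<alpha> \<beta> \<gamma> z \<longrightarrow>
              jac_eigvec \<alpha> \<beta> \<gamma> z \<in> jac_dom \<alpha> \<beta> \<gamma> \<and>
              jac_eigvec \<alpha> \<beta> \<gamma> z \<noteq> (\<lambda>_. 0) \<and>
              (\<forall>n. jac_op \<alpha> \<beta> \<gamma> (jac_eigvec \<alpha> \<beta> \<gamma> z) n = z * jac_eigvec \<alpha> \<beta> \<gamma> z n))"
proof -
  interpret jacobi_params \<alpha> \<beta> \<gamma> using assms by unfold_locales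
  have "jac_eigenvalue \<alpha> \<beta> \<gamma> z" if "FJ \<alpha> \<beta> \<gamma> z = 0" for z
    using eigvec_is_eigenvector[OF that] unfolding jac_eigenvalue_def by blast
  then have "z \<in> jac_spectrum \<alpha> \<beta> \<gamma> \<longleftrightarrow> FJ \<alpha> \<beta> \<gamma> z = 0" for z
    using eigenvalue_in_spectrum resolvent_if_FJ_nonzero unfolding jac_spectrum_def by blast
  then show ?thesis
    using eigvec_is_eigenvector FJ_zero_if_eigenvalue by blast
qed

end
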